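(* Let $m_0>0$ be the constant (depending only on $\mu,\Delta_0,\lambda_0$) for which, for every $k\in\mathbb N$, finite interval $\Lambda$, $\ell\in\mathbb N$ and nonempty $S_1,\dots,S_{k+1}\subset\Lambda$ with pairwise distances $\ge2\ell+1$, one has $\mathbb E\|P^\Lambda_{I_{\le k}}\prod_{i}P_-^{S_i}\|\le C_k\max_i\Upsilon_{S_i}|\Lambda|^{2k+1}e^{-m_0\ell}$. Let $\Lambda\subset\mathbb Z$ be a finite interval, $T$ an observable supported on an interval $\mathcal X\subset\Lambda$ with $\|T\|\le1$, $k,\ell\in\mathbb N$, and assume $\operatorname{dist}(\mathcal X,\mathbb Z\setminus\Lambda)>9(k+1)\ell+1$. For $j=1,\dots,k+1$ define $$T_j=T\,P_+^{\partial_{3\ell}[\mathcal X]^\Lambda_{9j\ell}}\prod_{i=1}^{j-1}P_-^{\partial_{3\ell}[\mathcal X]^\Lambda_{9i\ell}}$$ (empty product $=I$). Then $$T_j=P_+^{\partial_{3\ell}[\mathcal X]^\Lambda_{9j\ell}}T_jP_+^{\partial_{3\ell}[\mathcal X]^\Lambda_{9j\ell}}=P_+^{\partial^{out}_{3\ell}[\mathcal X]^\Lambda_{9j\ell}}\otimes P_+^{\partial^{in}_{3\ell}[\mathcal X]^\Lambda_{9j\ell}}\otimes T\prod_{i=1}^{j-1}P_-^{\partial_{3\ell}[\mathcal X]^\Lambda_{9i\ell}},$$ $T_j$ is supported in $[\mathcal X]^\Lambda_{(9j+3)\ell}$, $T\prod_{i=1}^{j-1}P_-^{\partial_{3\ell}[\mathcal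 X]^\Lambda_{9i\ell}}$ is supported in $[\mathcal X]^\Lambda_{(9j-6)\ell}$, and $$\mathbb E\Big\|\Big(T-\sum_{j=1}^{k+1}T_j\Big)_{P^\Lambda_{I_{\le k}}}\Big\|\le C_k|\Lambda|^{2k+1}e^{-m_0\ell}.$$
   Context: Spin chain setup. For $i\in\mathbb Z$ let $\mathcal H_i$ be a copy of $\mathbb C^2$; $\sigma^x,\sigma^y,\sigma^z$ Pauli matrices, $\sigma^\pm=\frac12(\sigma^x\pm i\sigma^y)$, $\mathcal N=\frac12(I-\sigma^z)$, subscript $i$ = action on $\mathcal H_i$. For finite $\Lambda\subset\mathbb Z$, $\mathcal H_\Lambda=\bigotimes_{i\in\Lambda}\mathcal H_i$; operators on $\mathcal H_S$, $S\subset\Lambda$, are identified with $T\otimes I_{\mathcal H_{\Lambda\setminus S}}$, and an observable is supported in $S$ if of this form. $H^\Lambda=\sum_{\{i,i+1\}\subset\Lambda}h_{i,i+1}+\sum_{i\in\Lambda}\mathcal N_i+\lambda\sum_{i\in\Lambda}\omega_i\mathcal N_i$, $h_{i,i+1}=-\mathcal N_i\mathcal N_{i+1}-\frac1{2\Delta}(\sigma_i^+\sigma_{i+1}^-+\sigma_i^-\sigma_{i+1}^+)$, $\Delta>1$, $\lambda>0$, $\{\omega_i\}$ i.i.d. with law $\mu$ absolutely continuous with bounded density, $\{0,1\}\subset\operatorname{supp}\mu\subset[0,1]$; $\mathbb E$ = expectation. Standing: $\Delta\ge\Delta_0>9$, $\lambda\ge\lambda_0>0$; constants depend on $\mu,\Delta_0,\lambda_0,k$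 only. Notation: $P_+^S=\bigotimes_{i\in S}(I-\mathcal N_i)$, $P_-^S=I-P_+^S$. $\Upsilon_S$ = number of maximal subintervals of $S$. $\operatorname{dist}_\Lambda(x,y)=|x-y|$. For $M\subset\Lambda$, $s\in\mathbb N_0$: $[M]^\Lambda_s=\{x\in\Lambda:\operatorname{dist}(x,M)\le s\}$; for $s\in\mathbb N$: $\partial^{out}_sM=[M]^\Lambda_s\setminus M$, $\partial^{in}_sM=\{x\in M:\operatorname{dist}(x,\Lambda\setminus M)\le s\}$, $\partial_sM=\partial^{in}_sM\cup\partial^{out}_sM$. $P^\Lambda_I=\chi_I(H^\Lambda)$, $(T)_Y=YTY^*$, $I_{\le k}=(-\infty,(k+\frac34)(1-\frac1\Delta)]$. *)

theory Defs
  imports "HOL-Probability.Probability"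
begin

text \<open>A basis vector of H_Lambda (tensor product of copies of C^2 over Lambda) is identified
  with the set x of sites i in Lambda carrying the state with N_i = 1 (spin down); so the basis
  of H_Lambda is Pow Lambda.  An operator on H_Lambda is its matrix with respect to this basis;
  entries outside Pow Lambda are irrelevant.\<close>

type_synonym cfg = "int set"
type_synonym op = "cfg \<Rightarrow> cfg \<Rightarrow> complex"

definition opeq :: "int set \<Rightarrow> op \<Rightarrow> op \<Rightarrow> bool" where
  "opeq L A B \<longleftrightarrow> (\<forall>x\<in>Pow L. \<forall>y\<in>Pow L. A x y = B x y)"

definition idop :: op where "idop = (\<lambda>x y. if x = y then 1 else 0)"
definition opadd :: "op \<Rightarrow> op \<Rightarrow> op" where "opadd A B = (\<lambda>x y. A x y + B x y)"
definition opsub :: "op \<Rightarrow> op \<Rightarrow> op" where "opsub A B = (\<lambda>x y. A x y - B x y)"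
definition opscale :: "complex \<Rightarrow> op \<Rightarrow> op" where "opscale c A = (\<lambda>x y. c * A x y)"
definition opsum :: "('i \<Rightarrow> op) \<Rightarrow> 'i set \<Rightarrow> op" where
  "opsum F I = (\<lambda>x y. \<Sum>i\<in>I. F i x y)"
definition opmul :: "int set \<Rightarrow> op \<Rightarrow> op \<Rightarrow> op" where
  "opmul L A B = (\<lambda>x y. \<Sum>z\<in>Pow L. A x z * B z y)"
definition adj :: "op \<Rightarrow> op" where "adj A = (\<lambda>x y. cnj (A y x))"
definition opprod :: "int set \<Rightarrow> op list \<Rightarrow> op" where
  "opprod L As = foldr (opmul L) As idop"

definition conjop :: "int set \<Rightarrow> op \<Rightarrow> op \<Rightarrow> op" where
  "conjop L T Y = opmul L (opmul L Y T) (adj Y)"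

definition apply_op :: "int set \<Rightarrow> op \<Rightarrow> (cfg \<Rightarrow> complex) \<Rightarrow> (cfg \<Rightarrow> complex)" where
  "apply_op L A v = (\<lambda>x. \<Sum>y\<in>Pow L. A x y * v y)"
definition vnorm :: "int set \<Rightarrow> (cfg \<Rightarrow> complex) \<Rightarrow> real" where
  "vnorm L v = sqrt (\<Sum>x\<in>Pow L. (cmod (v x))\<^sup>2)"
definition opnorm :: "int set \<Rightarrow> op \<Rightarrow> real" where
  "opnorm L A = Sup {vnorm L (apply_op L A v) | v. vnorm L v \<le> 1}"

text \<open>T (an operator on H_Lambda) is supported in S: it is of the form T' tensor I_{Lambda - S}.\<close>
definition supp_in :: "int set \<Rightarrow> int set \<Rightarrow> op \<Rightarrow> bool" where
  "supp_in L S A \<longleftrightarrow> S \<subseteq> L \<and> (\<exists>B::op. \<forall>x\<in>Pow L. \<forall>y\<in>Pow L.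
      A x y = (if x - S = y - S then B (x \<inter> S) (y \<inter> S) else 0))"

text \<open>N_i = (I - sigma^z_i)/2, sigma^+_i (lowers N_i from 1 to 0), sigma^-_i (raises it).\<close>
definition occN :: "int \<Rightarrow> op" where
  "occN i = (\<lambda>x y. if x = y \<and> i \<in> x then 1 else 0)"
definition sigp :: "int \<Rightarrow> op" where
  "sigp i = (\<lambda>x y. if i \<in> y \<and> x = y - {i} then 1 else 0)"
definition sigm :: "int \<Rightarrow> op" where
  "sigm i = (\<lambda>x y. if i \<notin> y \<and> x = insert i y then 1 else 0)"

text \<open>P_+^S = tensor over i in S of (I - N_i);  P_-^S = I - P_+^S\<close>
definition Pplus :: "int set \<Rightarrow> op" where
  "Pplus S = (\<lambda>x y. if x = y \<and> x \<inter> S = {} then 1 else 0)"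
definition Pminus :: "int set \<Rightarrow> op" where
  "Pminus S = opsub idop (Pplus S)"

definition hterm :: "int set \<Rightarrow> real \<Rightarrow> int \<Rightarrow> op" where
  "hterm L Del i = opsub (opscale (-1) (opmul L (occN i) (occN (i+1))))
     (opscale (complex_of_real (1 / (2 * Del)))
        (opadd (opmul L (sigp i) (sigm (i+1))) (opmul L (sigm i) (sigp (i+1)))))"

definition Ham :: "int set \<Rightarrow> real \<Rightarrow> real \<Rightarrow> (int \<Rightarrow> real) \<Rightarrow> op" where
  "Ham L Del lam \<omega> =
     opadd (opsum (hterm L Del) {i. i \<in> L \<and> i + 1 \<in> L})
       (opadd (opsum occN L)
          (opscale (complex_of_real lam) (opsum (\<lambda>i. opscale (complex_of_real (\<omega> i)) (occN i)) L)))"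

text \<open>Real eigenvalues of an operator on H_Lambda (for Hermitian H: its whole spectrum).\<close>
definition spec :: "int set \<Rightarrow> op \<Rightarrow> real set" where
  "spec L H = {e. \<exists>v. (\<exists>x\<in>Pow L. v x \<noteq> 0) \<and>
                       (\<forall>x\<in>Pow L. apply_op L H v x = complex_of_real e * v x)}"

text \<open>chi_I(H) = sum over eigenvalues e in I of the spectral projection of e, the latter being
  the Lagrange interpolation polynomial prod_{e' ~= e} (H - e')/(e - e') evaluated at H.\<close>
definition specproj :: "int set \<Rightarrow> op \<Rightarrow> real \<Rightarrow> op" where
  "specproj L H e = opprod L (map (\<lambda>e'. opscale (complex_of_real (1 / (e - e')))
                                  (opsub H (opscale (complex_of_real e') idop)))
                              (sorted_list_of_set (spec L H - {e})))"
definition chi :: "int set \<Rightarrow> real set \<Rightarrow> op \<Rightarrow> op" where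
  "chi L I H = opsum (specproj L H) (spec L H \<inter> I)"

definition Ile :: "nat \<Rightarrow> real \<Rightarrow> real set" where
  "Ile k Del = {..(real k + 3/4) * (1 - 1 / Del)}"

definition fin_interval :: "int set \<Rightarrow> bool" where
  "fin_interval S \<longleftrightarrow> (\<exists>a b. a \<le> b \<and> S = {a..b})"

definition setdist :: "int set \<Rightarrow> int set \<Rightarrow> real" where
  "setdist A B = Inf {real_of_int \<bar>x - y\<bar> | x y. x \<in> A \<and> y \<in> B}"

definition nbhd :: "int set \<Rightarrow> int set \<Rightarrow> nat \<Rightarrow> int set" where
  "nbhd L M s = {x \<in> L. \<exists>y\<in>M. \<bar>x - y\<bar> \<le> int s}"
definition bd_out :: "int set \<Rightarrow> nat \<Rightarrow> int set \<Rightarrow> int set" where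
  "bd_out L s M = nbhd L M s - M"
definition bd_in :: "int set \<Rightarrow> nat \<Rightarrow> int set \<Rightarrow> int set" where
  "bd_in L s M = {x \<in> M. \<exists>y\<in>L - M. \<bar>x - y\<bar> \<le> int s}"
definition bd :: "int set \<Rightarrow> nat \<Rightarrow> int set \<Rightarrow> int set" where
  "bd L s M = bd_in L s M \<union> bd_out L s M"

definition Upsilon :: "int set \<Rightarrow> nat" where
  "Upsilon S = card {I. fin_interval I \<and> I \<subseteq> S \<and>
                        (\<forall>J. fin_interval J \<and> I \<subseteq> J \<and> J \<subseteq> S \<longrightarrow> J = I)}"

definition supp_measure :: "real measure \<Rightarrow> real set" where
  "supp_measure M = {x. \<forall>e>0. measure M (ball x e) > 0}"

definition admissible_law :: "real measure \<Rightarrow> bool" where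
  "admissible_law \<mu> \<longleftrightarrow> prob_space \<mu> \<and> sets \<mu> = sets borel \<and>
     (\<exists>f D. f \<in> borel_measurable borel \<and> (\<forall>x. f x \<le> ennreal D) \<and> \<mu> = density lborel f) \<and>
     {0, 1} \<subseteq> supp_measure \<mu> \<and> supp_measure \<mu> \<subseteq> {0..1}"

definition Expect :: "real measure \<Rightarrow> int set \<Rightarrow> ((int \<Rightarrow> real) \<Rightarrow> real) \<Rightarrow> ennreal" where
  "Expect \<mu> L F = (\<integral>\<^sup>+ \<omega>. ennreal (F \<omega>) \<partial>(PiM L (\<lambda>_. \<mu>)))"

end

theory Submission
  imports Defs "HOL-Library.Function_Algebras" "HOL-Computational_Algebra.Fundamental_Theorem_Algebra"
begin

text \<open>All projections P+(S), P-(S) are diagonal in the configuration basis, with entries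
  indicator functions of the configuration. Hence T_j has entries T x y * f_j(y), and since every
  annulus A_i = \<partial>_{3l}[X]_{9il} avoids X, such a diagonal factor can be moved from one side of T
  to the other. The T_j telescope: T - \<Sum>_j T_j = T \<Prod>_i P-(A_i) = (\<Prod>_i P-(A_i)) T, so for
  the spectral projection P we get |(T - \<Sum>_j T_j)_P| \<le> |P \<Prod>_i P-(A_i)| |T| |P|, and |P| \<le> 1.
  The latter holds because the Hamiltonian is Hermitian: every vector is a sum of mutually
  orthogonal eigenvectors (an annihilating polynomial splits over the complex numbers, and
  Hermiticity excludes Jordan blocks), on which the Lagrange interpolation polynomials defining P
  act as orthogonal projections. Finally the annuli are nonempty, (2l+1)-separated and each is a
  union of at most two intervals, so the assumed bound applies with \<Upsilon> \<le> 2.\<close>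

section \<open>Operators on the configuration space\<close>

lemma apply_op_cong: "(\<And>y. y \<in> Pow L \<Longrightarrow> v y = w y) \<Longrightarrow> apply_op L A v = apply_op L A w"
  unfolding apply_op_def by (intro ext sum.cong) auto

lemma apply_op_opeq: "opeq L A B \<Longrightarrow> x \<in> Pow L \<Longrightarrow> apply_op L A v x = apply_op L B v x"
  unfolding apply_op_def opeq_def by (intro sum.cong) auto

lemma vnorm_cong: "(\<And>y. y \<in> Pow L \<Longrightarrow> v y = w y) \<Longrightarrow> vnorm L v = vnorm L w"
  unfolding vnorm_def by (intro arg_cong[where f=sqrt] sum.cong) auto

lemma opnorm_opeq: "opeq L A B \<Longrightarrow> opnorm L A = opnorm L B"
proof -
  assume h: "opeq L A B"
  have "vnorm L (apply_op L A v) = vnorm L (apply_op L B v)" for v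
    by (rule vnorm_cong) (simp add: apply_op_opeq[OF h])
  then show ?thesis unfolding opnorm_def by simp
qed

lemma opeq_refl [simp]: "opeq L A A"
  by (simp add: opeq_def)

lemma opeq_trans: "opeq L A B \<Longrightarrow> opeq L B C \<Longrightarrow> opeq L A C"
  by (simp add: opeq_def)

lemma opmul_cong: "opeq L A A' \<Longrightarrow> opeq L B B' \<Longrightarrow> opeq L (opmul L A B) (opmul L A' B')"
  unfolding opeq_def opmul_def by (auto intro!: sum.cong)

lemma opmul_assoc: "opmul L (opmul L A B) C = opmul L A (opmul L B C)"
  unfolding opmul_def
  by (auto intro!: ext simp: sum_distrib_left sum_distrib_right mult.assoc intro: sum.swap)

lemma apply_op_opmul: "apply_op L (opmul L A B) v = apply_op L A (apply_op L B v)"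
  unfolding opmul_def apply_op_def
  by (auto intro!: ext simp: sum_distrib_left sum_distrib_right mult.assoc intro: sum.swap)

lemma apply_op_scale: "apply_op L A (\<lambda>x. c * v x) = (\<lambda>x. c * apply_op L A v x)"
  unfolding apply_op_def by (auto intro!: ext simp: sum_distrib_left algebra_simps)

lemma apply_op_add: "apply_op L A (\<lambda>x. v x + w x) = (\<lambda>x. apply_op L A v x + apply_op L A w x)"
  unfolding apply_op_def by (auto intro!: ext simp: sum.distrib algebra_simps)

lemma apply_op_diff: "apply_op L A (\<lambda>x. v x - w x) = (\<lambda>x. apply_op L A v x - apply_op L A w x)"
  unfolding apply_op_def by (auto intro!: ext simp: sum_subtractf algebra_simps)

lemma apply_op_sum: "apply_op L A (\<lambda>x. \<Sum>i\<in>F. f i x) = (\<lambda>x. \<Sum>i\<in>F. apply_op L A (f i) x)"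
  unfolding apply_op_def by (auto intro!: ext simp: sum_distrib_left intro: sum.swap)

lemma apply_op_zero: "apply_op L A (\<lambda>x. 0) = (\<lambda>x. 0)"
  unfolding apply_op_def by simp

lemma apply_op_idop:
  assumes "finite L" "x \<in> Pow L"
  shows "apply_op L idop w x = w x"
proof -
  have "apply_op L idop w x = (\<Sum>y\<in>Pow L. if x = y then w y else 0)"
    unfolding apply_op_def idop_def by (rule sum.cong) auto
  then show ?thesis using assms by (simp add: sum.delta)
qed

lemma apply_op_opscale: "apply_op L (opscale c A) v x = c * apply_op L A v x"
  unfolding apply_op_def opscale_def by (simp add: sum_distrib_left mult.assoc)

lemma apply_op_opsub: "apply_op L (opsub A B) v x = apply_op L A v x - apply_op L B v x"
  unfolding apply_op_def opsub_def by (simp add: sum_subtractf algebra_simps)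

lemma apply_op_opsum: "finite S \<Longrightarrow> apply_op L (opsum F S) v x = (\<Sum>s\<in>S. apply_op L (F s) v x)"
  unfolding apply_op_def opsum_def by (simp add: sum_distrib_right sum.swap[of _ S])

lemma vnorm_nonneg: "vnorm L v \<ge> 0"
  unfolding vnorm_def by (simp add: sum_nonneg)

lemma vnorm_eq_L2_set: "vnorm L v = L2_set (\<lambda>x. cmod (v x)) (Pow L)"
  unfolding vnorm_def L2_set_def by simp

lemma norm_le_vnorm: "finite L \<Longrightarrow> y \<in> Pow L \<Longrightarrow> cmod (v y) \<le> vnorm L v"
  unfolding vnorm_eq_L2_set by (rule member_le_L2_set) auto

lemma vnorm_eq_0D: "finite L \<Longrightarrow> vnorm L v = 0 \<Longrightarrow> y \<in> Pow L \<Longrightarrow> v y = 0"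
  using norm_le_vnorm[of L y v] by simp

lemma vnorm_scale: "vnorm L (\<lambda>x. c * v x) = cmod c * vnorm L v"
  unfolding vnorm_def
  by (simp add: norm_mult power_mult_distrib sum_distrib_left[symmetric] real_sqrt_mult)

lemma bdd_above_opnorm_set:
  assumes "finite L"
  shows "bdd_above {vnorm L (apply_op L A v) | v. vnorm L v \<le> 1}"
proof -
  define r where "r x = (\<Sum>y\<in>Pow L. cmod (A x y))" for x
  have "vnorm L (apply_op L A v) \<le> vnorm L r" if "vnorm L v \<le> 1" for v
  proof -
    have "cmod (apply_op L A v x) \<le> r x" for x
    proof -
      have "cmod (apply_op L A v x) \<le> (\<Sum>y\<in>Pow L. cmod (A x y * v y))"
        unfolding apply_op_def by (rule norm_sum)
      also have "\<dots> \<le> r x"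
        unfolding r_def
      proof (rule sum_mono)
        fix y assume "y \<in> Pow L"
        then have "cmod (v y) \<le> 1" using norm_le_vnorm[OF assms, of y v] that by simp
        then show "cmod (A x y * v y) \<le> cmod (A x y)"
          by (simp add: norm_mult mult_left_le)
      qed
      finally show ?thesis .
    qed
    moreover have "r x \<ge> 0" for x
      unfolding r_def by (simp add: sum_nonneg)
    ultimately show ?thesis
      unfolding vnorm_def by (intro real_sqrt_le_mono sum_mono power_mono) auto
  qed
  then show ?thesis unfolding bdd_above_def by blast
qed

lemma opnorm_nonneg: "finite L \<Longrightarrow> opnorm L A \<ge> 0"
proof -
  assume f: "finite L"
  have "vnorm L (apply_op L A (\<lambda>x. 0)) \<in> {vnorm L (apply_op L A v) | v. vnorm L v \<le> 1}"
    by (auto simp: vnorm_def)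
  then show ?thesis
    unfolding opnorm_def using cSup_upper[OF _ bdd_above_opnorm_set[OF f]]
    by (fastforce simp: apply_op_zero vnorm_def)
qed

lemma vnorm_apply_op_le:
  assumes f: "finite L"
  shows "vnorm L (apply_op L A v) \<le> opnorm L A * vnorm L v"
proof (cases "vnorm L v = 0")
  case True
  then have "apply_op L A v = apply_op L A (\<lambda>x. 0)"
    by (intro apply_op_cong) (simp add: vnorm_eq_0D[OF f])
  then show ?thesis using True by (simp add: apply_op_zero vnorm_def)
next
  case False
  then have pos: "vnorm L v > 0" using vnorm_nonneg[of L v] by simp
  define u where "u = (\<lambda>x. complex_of_real (1 / vnorm L v) * v x)"
  have nu: "vnorm L u = 1" unfolding u_def vnorm_scale using pos by (simp add: norm_divide)
  have "vnorm L (apply_op L A u) \<le> opnorm L A"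
    unfolding opnorm_def using nu by (intro cSup_upper[OF _ bdd_above_opnorm_set[OF f]]) auto
  moreover have "apply_op L A v = (\<lambda>x. complex_of_real (vnorm L v) * apply_op L A u x)"
    unfolding u_def apply_op_scale using pos by (auto simp: algebra_simps)
  ultimately show ?thesis using pos by (simp add: vnorm_scale mult.commute)
qed

lemma opnorm_leI:
  assumes "c \<ge> 0" and "\<And>v. vnorm L (apply_op L A v) \<le> c * vnorm L v"
  shows "opnorm L A \<le> c"
  unfolding opnorm_def
proof (rule cSup_least)
  show "{vnorm L (apply_op L A v) | v. vnorm L v \<le> 1} \<noteq> {}"
    by (auto intro!: exI[of _ "\<lambda>x. 0"] simp: vnorm_def)
  fix r assume "r \<in> {vnorm L (apply_op L A v) | v. vnorm L v \<le> 1}"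
  then obtain v where "r = vnorm L (apply_op L A v)" "vnorm L v \<le> 1" by auto
  then show "r \<le> c" using assms by (meson dual_order.trans mult_left_le)
qed

lemma opnorm_opmul_le:
  assumes f: "finite L"
  shows "opnorm L (opmul L A B) \<le> opnorm L A * opnorm L B"
proof (rule opnorm_leI)
  show "0 \<le> opnorm L A * opnorm L B" using opnorm_nonneg[OF f] by simp
  fix v
  have "vnorm L (apply_op L (opmul L A B) v) \<le> opnorm L A * vnorm L (apply_op L B v)"
    unfolding apply_op_opmul by (rule vnorm_apply_op_le[OF f])
  also have "\<dots> \<le> opnorm L A * (opnorm L B * vnorm L v)"
    by (intro mult_left_mono vnorm_apply_op_le[OF f] opnorm_nonneg[OF f])
  finally show "vnorm L (apply_op L (opmul L A B) v) \<le> opnorm L A * opnorm L B * vnorm L v"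
    by (simp add: mult.assoc)
qed

definition ip :: "int set \<Rightarrow> (cfg \<Rightarrow> complex) \<Rightarrow> (cfg \<Rightarrow> complex) \<Rightarrow> complex" where
  "ip L v w = (\<Sum>x\<in>Pow L. v x * cnj (w x))"

lemma ip_adj: "ip L (apply_op L A u) w = ip L u (apply_op L (adj A) w)"
  unfolding ip_def apply_op_def adj_def
  by (auto simp: sum_distrib_left sum_distrib_right mult_ac cnj_sum intro: sum.swap)

lemma ip_self: "ip L v v = complex_of_real ((vnorm L v)\<^sup>2)"
proof -
  have "(vnorm L v)\<^sup>2 = (\<Sum>x\<in>Pow L. (cmod (v x))\<^sup>2)"
    unfolding vnorm_def by (simp add: sum_nonneg)
  then show ?thesis unfolding ip_def
    by (auto simp: of_real_sum complex_norm_square simp del: of_real_power)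
qed

lemma norm_ip_le: "cmod (ip L v w) \<le> vnorm L v * vnorm L w"
proof -
  have "cmod (ip L v w) \<le> (\<Sum>x\<in>Pow L. cmod (v x * cnj (w x)))"
    unfolding ip_def by (rule norm_sum)
  also have "\<dots> = (\<Sum>x\<in>Pow L. \<bar>cmod (v x)\<bar> * \<bar>cmod (w x)\<bar>)"
    by (simp add: norm_mult)
  also have "\<dots> \<le> vnorm L v * vnorm L w"
    unfolding vnorm_eq_L2_set by (rule L2_set_mult_ineq)
  finally show ?thesis .
qed

lemma ip_cong: "(\<And>x. x \<in> Pow L \<Longrightarrow> v x = v' x) \<Longrightarrow> (\<And>x. x \<in> Pow L \<Longrightarrow> w x = w' x) \<Longrightarrow>
  ip L v w = ip L v' w'"
  unfolding ip_def by (intro sum.cong) auto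

lemma ip_scale_left: "ip L (\<lambda>x. c * v x) w = c * ip L v w"
  unfolding ip_def by (simp add: sum_distrib_left mult.assoc)

lemma ip_scale_right: "ip L v (\<lambda>x. c * w x) = cnj c * ip L v w"
  unfolding ip_def by (simp add: sum_distrib_left mult_ac)

lemma ip_sum_left: "ip L (\<lambda>x. \<Sum>i\<in>F. f i x) w = (\<Sum>i\<in>F. ip L (f i) w)"
  unfolding ip_def sum_distrib_right by (rule sum.swap)

lemma ip_sum_right: "ip L v (\<lambda>x. \<Sum>i\<in>F. f i x) = (\<Sum>i\<in>F. ip L v (f i))"
  unfolding ip_def cnj_sum sum_distrib_left by (rule sum.swap)

lemma ip_diff_left: "ip L (\<lambda>x. a x - b x) w = ip L a w - ip L b w"
  unfolding ip_def by (simp add: sum_subtractf algebra_simps)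

lemma ip_self_neq_0: "finite L \<Longrightarrow> x \<in> Pow L \<Longrightarrow> w x \<noteq> 0 \<Longrightarrow> ip L w w \<noteq> 0"
  using norm_le_vnorm[of L x w] by (auto simp: ip_self)

lemma ip_self_eq_0D: "finite L \<Longrightarrow> ip L r r = 0 \<Longrightarrow> x \<in> Pow L \<Longrightarrow> r x = 0"
  using vnorm_eq_0D[of L r x] by (simp add: ip_self)

lemma opnorm_adj_le:
  assumes f: "finite L"
  shows "opnorm L (adj A) \<le> opnorm L A"
proof (rule opnorm_leI[OF opnorm_nonneg[OF f]])
  fix v
  define u where "u = apply_op L (adj A) v"
  have "(vnorm L u)\<^sup>2 = cmod (ip L u u)"
    by (simp add: ip_self norm_power)
  also have "ip L u u = ip L (apply_op L A u) v"
    unfolding u_def by (simp add: ip_adj)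
  also have "cmod \<dots> \<le> vnorm L (apply_op L A u) * vnorm L v"
    by (rule norm_ip_le)
  also have "\<dots> \<le> opnorm L A * vnorm L u * vnorm L v"
    by (intro mult_right_mono vnorm_apply_op_le[OF f] vnorm_nonneg)
  finally have h: "(vnorm L u)\<^sup>2 \<le> opnorm L A * vnorm L u * vnorm L v" .
  show "vnorm L u \<le> opnorm L A * vnorm L v"
  proof (cases "vnorm L u = 0")
    case True
    then show ?thesis using opnorm_nonneg[OF f, of A] vnorm_nonneg[of L v] by simp
  next
    case False
    then have "vnorm L u > 0" using vnorm_nonneg[of L u] by simp
    then show ?thesis using h by (simp add: power2_eq_square mult_ac)
  qed
qed

lemma opnorm_conjop_le:
  assumes f: "finite L" and R: "opeq L R (opmul L Q T)"
    and T: "opnorm L T \<le> 1" and Y: "opnorm L Y \<le> 1"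
  shows "opnorm L (conjop L R Y) \<le> opnorm L (opmul L Y Q)"
proof -
  have "opeq L (conjop L R Y) (opmul L (opmul L (opmul L Y Q) T) (adj Y))"
    unfolding conjop_def using opmul_cong[OF opmul_cong[OF opeq_refl R] opeq_refl]
    by (simp add: opmul_assoc)
  then have "opnorm L (conjop L R Y) = opnorm L (opmul L (opmul L (opmul L Y Q) T) (adj Y))"
    by (rule opnorm_opeq)
  also have "\<dots> \<le> opnorm L (opmul L (opmul L Y Q) T) * opnorm L (adj Y)"
    by (rule opnorm_opmul_le[OF f])
  also have "\<dots> \<le> (opnorm L (opmul L Y Q) * opnorm L T) * 1"
    using opnorm_opmul_le[OF f, of "opmul L Y Q" T] opnorm_adj_le[OF f, of Y] Y opnorm_nonneg[OF f]
    by (intro mult_mono) auto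
  also have "\<dots> \<le> opnorm L (opmul L Y Q)"
    using T opnorm_nonneg[OF f, of "opmul L Y Q"] by (simp add: mult_left_le)
  finally show ?thesis .
qed

section \<open>Spectral projections of Hermitian operators\<close>

definition herm :: "int set \<Rightarrow> op \<Rightarrow> bool" where
  "herm L H \<longleftrightarrow> (\<forall>x\<in>Pow L. \<forall>y\<in>Pow L. H x y = cnj (H y x))"

lemma herm_ip: "herm L H \<Longrightarrow> ip L (apply_op L H v) w = ip L v (apply_op L H w)"
proof -
  assume "herm L H"
  then have "opeq L (adj H) H"
    unfolding herm_def opeq_def adj_def by metis
  then show ?thesis
    unfolding ip_adj by (intro ip_cong) (auto simp: apply_op_opeq)
qed

lemma sum_apply: "(\<Sum>a\<in>A. F a) x = (\<Sum>a\<in>A. F a x)"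
  by (induct A rule: infinite_finite_induct) auto

lemma linear_relation_on_small_domain:
  fixes g :: "nat \<Rightarrow> 'a \<Rightarrow> complex"
  assumes fV: "finite V" and n: "card V \<le> n"
  shows "\<exists>c. (\<exists>j\<le>n. c j \<noteq> 0) \<and> (\<forall>x\<in>V. (\<Sum>j\<le>n. c j * g j x) = 0)"
proof -
  interpret fvs: vector_space "\<lambda>(c::complex) (f::'a \<Rightarrow> complex) x. c * f x"
    by unfold_locales (auto simp: algebra_simps plus_fun_def)
  define rv where "rv j = (\<lambda>x. if x \<in> V then g j x else 0)" for j
  have rv: "(\<Sum>j\<le>n. c j * g j x) = 0" if "\<And>x. (\<Sum>j\<le>n. c j * rv j x) = 0" "x \<in> V" for c x
    using that(1)[of x] that(2) by (simp add: rv_def)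
  show ?thesis
  proof (cases "inj_on rv {..n}")
    case False
    then obtain i j where ij: "i \<le> n" "j \<le> n" "i \<noteq> j" "rv i = rv j"
      unfolding inj_on_def by auto
    define c where "c k = (if k = i then 1 else if k = j then -1 else (0::complex))" for k
    have "(\<Sum>k\<le>n. c k * rv k x) = (\<Sum>k\<in>{i,j}. c k * rv k x)" for x
      by (rule sum.mono_neutral_right) (use ij in \<open>auto simp: c_def\<close>)
    then have "(\<Sum>k\<le>n. c k * rv k x) = 0" for x
      using ij by (simp add: c_def)
    then show ?thesis
      using ij rv by (intro exI[of _ c]) (auto simp: c_def)
  next
    case True
    define d where "d y = (\<lambda>x. if x = y then 1 else (0::complex))" for y :: 'a
    have "rv j = (\<Sum>y\<in>V. (\<lambda>x. g j y * d y x))" for j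
    proof
      fix x
      show "rv j x = (\<Sum>y\<in>V. (\<lambda>x. g j y * d y x)) x"
        unfolding sum_apply using fV
        by (simp add: d_def rv_def if_distrib[of "\<lambda>c. g j _ * c"] sum.delta cong: if_cong)
    qed
    then have "rv ` {..n} \<subseteq> fvs.span (d ` V)"
      by (auto intro!: fvs.span_sum fvs.span_scale intro: fvs.span_base)
    moreover have "card (d ` V) < card (rv ` {..n})"
      using card_image_le[OF fV, of d] n True by (simp add: card_image)
    ultimately have "fvs.dependent (rv ` {..n})"
      using fvs.independent_span_bound[OF finite_imageI[OF fV]] by (meson leD)
    then obtain u where u: "\<exists>v\<in>rv ` {..n}. u v \<noteq> 0" "(\<Sum>v\<in>rv ` {..n}. (\<lambda>x. u v * v x)) = 0"
      unfolding fvs.dependent_finite[OF finite_imageI[OF finite_atMost]] by blast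
    have "(\<Sum>j\<le>n. u (rv j) * rv j x) = 0" for x
      using fun_cong[OF u(2), of x] unfolding sum_apply sum.reindex[OF True] by simp
    then show ?thesis
      using u(1) rv by (intro exI[of _ "\<lambda>j. u (rv j)"]) auto
  qed
qed

lemma prod_list_eq_1: "(\<And>x. x \<in> set xs \<Longrightarrow> g x = 1) \<Longrightarrow> prod_list (map g xs) = (1::complex)"
  by (induction xs) auto

locale hermitian =
  fixes L :: "int set" and H :: op
  assumes finite_L: "finite L" and herm_H: "herm L H"
begin

text \<open>Zero is admitted as an eigenvector; it keeps decompositions into eigenvectors total.\<close>
definition eigvec :: "complex \<Rightarrow> (cfg \<Rightarrow> complex) \<Rightarrow> bool" where
  "eigvec z w \<longleftrightarrow> (\<forall>x\<in>Pow L. apply_op L H w x = z * w x)"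

lemma mem_spec_iff: "e \<in> spec L H \<longleftrightarrow> (\<exists>v. (\<exists>x\<in>Pow L. v x \<noteq> 0) \<and> eigvec (of_real e) v)"
  unfolding spec_def eigvec_def by simp

lemma eigvec_zero: "eigvec z (\<lambda>x. 0)"
  by (simp add: eigvec_def apply_op_zero)

lemma ip_eigvec_left: "eigvec z w \<Longrightarrow> ip L (apply_op L H w) u = z * ip L w u"
  unfolding eigvec_def by (subst ip_cong[where v'="\<lambda>x. z * w x" and w'=u]) (auto simp: ip_scale_left)

lemma ip_eigvec_right: "eigvec z w \<Longrightarrow> ip L u (apply_op L H w) = cnj z * ip L u w"
  unfolding eigvec_def by (subst ip_cong[where v'=u and w'="\<lambda>x. z * w x"]) (auto simp: ip_scale_right)

lemma eigenvalue_real: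
  assumes "eigvec z w" "x \<in> Pow L" "w x \<noteq> 0"
  shows "z = of_real (Re z)"
proof -
  have "z * ip L w w = cnj z * ip L w w"
    using ip_eigvec_left[OF assms(1)] ip_eigvec_right[OF assms(1)] herm_ip[OF herm_H] by metis
  then have "cnj z = z"
    using ip_self_neq_0[of L x w] finite_L assms(2,3) by simp
  then show ?thesis by (simp add: complex_eq_iff)
qed

lemma eigvec_orthogonal:
  assumes "eigvec (of_real e) v" "eigvec (of_real f) w" "e \<noteq> f"
  shows "ip L v w = 0"
proof -
  have "of_real e * ip L v w = of_real f * ip L v w"
    using ip_eigvec_left[OF assms(1)] ip_eigvec_right[OF assms(2)] herm_ip[OF herm_H]
    by (metis complex_cnj_complex_of_real)
  then show ?thesis using assms(3) by simp
qed

lemma no_generalized_eigvec: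
  assumes z: "cnj z = z" and h: "eigvec z (\<lambda>x. apply_op L H u x - z * u x)"
    and x: "x \<in> Pow L"
  shows "apply_op L H u x - z * u x = 0"
proof -
  define r where "r = (\<lambda>x. apply_op L H u x - z * u x)"
  have "ip L r r = ip L (apply_op L H u) r - z * ip L u r"
    unfolding r_def by (simp add: ip_diff_left ip_scale_left)
  also have "ip L (apply_op L H u) r = cnj z * ip L u r"
    using h unfolding r_def[symmetric] herm_ip[OF herm_H] by (rule ip_eigvec_right)
  finally have "ip L r r = 0" using z by simp
  then show ?thesis using ip_self_eq_0D[OF finite_L _ x] unfolding r_def by blast
qed

lemma finite_spec: "finite (spec L H)"
proof (rule ccontr)
  assume inf: "infinite (spec L H)"
  define N where "N = card (Pow L)"
  obtain B where B: "B \<subseteq> spec L H" "finite B" "card B = Suc N"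
    using infinite_arbitrarily_large[OF inf] by blast
  obtain h where h: "bij_betw h {0..<Suc N} B"
    using ex_bij_betw_nat_finite[OF B(2)] B(3) by auto
  obtain W where W: "\<And>e. e \<in> spec L H \<Longrightarrow> (\<exists>x\<in>Pow L. W e x \<noteq> 0) \<and> eigvec (of_real e) (W e)"
    using mem_spec_iff by metis
  define g where "g j = W (h j)" for j
  have hB: "j \<le> N \<Longrightarrow> h j \<in> spec L H" for j
    using h B(1) unfolding bij_betw_def by auto
  have hinj: "j \<le> N \<Longrightarrow> k \<le> N \<Longrightarrow> h j = h k \<Longrightarrow> j = k" for j k
    using h unfolding bij_betw_def inj_on_def by auto
  obtain c where c: "\<exists>j\<le>N. c j \<noteq> 0" "\<forall>x\<in>Pow L. (\<Sum>j\<le>N. c j * g j x) = 0"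
    using linear_relation_on_small_domain[of "Pow L" N g] finite_L unfolding N_def by auto
  have "c k = 0" if k: "k \<le> N" for k
  proof -
    have "0 = ip L (\<lambda>x. \<Sum>j\<le>N. c j * g j x) (g k)"
      using c(2) unfolding ip_def by simp
    also have "\<dots> = (\<Sum>j\<le>N. c j * ip L (g j) (g k))"
      unfolding ip_sum_left by (simp add: ip_scale_left)
    also have "\<dots> = c k * ip L (g k) (g k) + (\<Sum>j\<in>{..N} - {k}. c j * ip L (g j) (g k))"
      using k by (simp add: sum.remove)
    also have "(\<Sum>j\<in>{..N} - {k}. c j * ip L (g j) (g k)) = 0"
    proof (intro sum.neutral ballI)
      fix j assume j: "j \<in> {..N} - {k}"
      then have "h j \<noteq> h k" using hinj k by auto
      then show "c j * ip L (g j) (g k) = 0"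
        using eigvec_orthogonal[OF conjunct2[OF W[OF hB]] conjunct2[OF W[OF hB]]] j k
        by (auto simp: g_def)
    qed
    finally show ?thesis
      using W[OF hB[OF k]] ip_self_neq_0[OF finite_L] unfolding g_def by auto
  qed
  then show False using c(1) by auto
qed

definition Hpow :: "nat \<Rightarrow> (cfg \<Rightarrow> complex) \<Rightarrow> (cfg \<Rightarrow> complex)" where
  "Hpow j v = (apply_op L H ^^ j) v"

definition poly_apply :: "complex poly \<Rightarrow> (cfg \<Rightarrow> complex) \<Rightarrow> (cfg \<Rightarrow> complex)" where
  "poly_apply p v = (\<lambda>x. \<Sum>j\<le>degree p. coeff p j * Hpow j v x)"

lemma poly_apply_eq_sum: "degree p < n \<Longrightarrow> poly_apply p v x = (\<Sum>j<n. coeff p j * Hpow j v x)"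
  unfolding poly_apply_def by (rule sum.mono_neutral_left) (auto simp: coeff_eq_0)

lemma poly_apply_0 [simp]: "poly_apply 0 v = (\<lambda>x. 0)"
  by (simp add: poly_apply_def)

lemma poly_apply_pCons: "poly_apply (pCons a p) v = (\<lambda>x. a * v x + apply_op L H (poly_apply p v) x)"
proof
  fix x
  define n where "n = Suc (degree p)"
  have d1: "degree (pCons a p) < Suc n"
    unfolding n_def by (metis degree_pCons_le le_imp_less_Suc)
  have d2: "degree p < n"
    unfolding n_def by simp
  have "poly_apply (pCons a p) v x = a * v x + (\<Sum>j<n. coeff p j * apply_op L H (Hpow j v) x)"
    unfolding poly_apply_eq_sum[OF d1] by (subst sum.lessThan_Suc_shift) (simp add: Hpow_def)
  also have "(\<Sum>j<n. coeff p j * apply_op L H (Hpow j v) x) = apply_op L H (poly_apply p v) x"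
  proof -
    have "poly_apply p v = (\<lambda>y. \<Sum>j<n. coeff p j * Hpow j v y)"
      using poly_apply_eq_sum[OF d2] by auto
    then show ?thesis by (simp add: apply_op_sum apply_op_scale)
  qed
  finally show "poly_apply (pCons a p) v x = a * v x + apply_op L H (poly_apply p v) x" .
qed

lemma poly_apply_add: "poly_apply (p + q) v = (\<lambda>x. poly_apply p v x + poly_apply q v x)"
proof
  fix x
  define n where "n = Suc (max (degree p) (degree q))"
  have "degree (p + q) < n" "degree p < n" "degree q < n"
    unfolding n_def using degree_add_le_max[of p q] by auto
  then show "poly_apply (p + q) v x = poly_apply p v x + poly_apply q v x"
    by (simp add: poly_apply_eq_sum sum.distrib distrib_right)
qed

lemma poly_apply_smult: "poly_apply (smult c p) v = (\<lambda>x. c * poly_apply p v x)"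
proof
  fix x
  define n where "n = Suc (degree p)"
  have "degree (smult c p) < n" "degree p < n"
    unfolding n_def using degree_smult_le[of c p] by auto
  then show "poly_apply (smult c p) v x = c * poly_apply p v x"
    by (simp add: poly_apply_eq_sum sum_distrib_left mult.assoc)
qed

lemma poly_apply_linear_factor:
  "poly_apply ([:-z, 1:] * p) v = (\<lambda>x. apply_op L H (poly_apply p v) x - z * poly_apply p v x)"
proof -
  have e: "[:-z, 1:] * p = smult (-z) p + pCons 0 p" by simp
  show ?thesis
    unfolding e poly_apply_add poly_apply_smult poly_apply_pCons by (rule ext) (simp add: algebra_simps)
qed

lemma poly_apply_eigvec: "eigvec z w \<Longrightarrow> x \<in> Pow L \<Longrightarrow> poly_apply p w x = poly p z * w x"
proof (induction p arbitrary: x)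
  case (pCons a p)
  have "apply_op L H (poly_apply p w) = apply_op L H (\<lambda>y. poly p z * w y)"
    by (rule apply_op_cong) (use pCons in auto)
  then have "apply_op L H (poly_apply p w) x = poly p z * (z * w x)"
    using pCons(3,4) by (simp add: apply_op_scale eigvec_def)
  then show ?case by (simp add: poly_apply_pCons algebra_simps)
qed simp

lemma poly_apply_diff: "poly_apply p (\<lambda>x. v x - u x) = (\<lambda>x. poly_apply p v x - poly_apply p u x)"
proof -
  have "Hpow j (\<lambda>x. v x - u x) = (\<lambda>x. Hpow j v x - Hpow j u x)" for j
    by (induction j) (simp_all add: Hpow_def apply_op_diff)
  then show ?thesis
    unfolding poly_apply_def by (simp add: sum_subtractf algebra_simps)
qed

definition eig_decomposable :: "(cfg \<Rightarrow> complex) \<Rightarrow> bool" where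
  "eig_decomposable v \<longleftrightarrow> (\<exists>f. (\<forall>e\<in>spec L H. eigvec (of_real e) (f e)) \<and>
                 (\<forall>x\<in>Pow L. v x = (\<Sum>e\<in>spec L H. f e x)))"

lemma eig_decomposable_zero: "(\<And>x. x \<in> Pow L \<Longrightarrow> v x = 0) \<Longrightarrow> eig_decomposable v"
  unfolding eig_decomposable_def by (intro exI[of _ "\<lambda>e x. 0"]) (simp add: eigvec_zero)

lemma eig_decomposable_eigvec:
  assumes w: "eigvec (of_real e) w"
  shows "eig_decomposable w"
proof (cases "\<forall>x\<in>Pow L. w x = 0")
  case True
  then show ?thesis by (intro eig_decomposable_zero) auto
next
  case False
  then have e: "e \<in> spec L H" using w mem_spec_iff by blast
  define f where "f e' = (\<lambda>x. if e' = e then w x else 0)" for e'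
  have "eigvec (of_real e') (f e')" for e'
    by (cases "e' = e") (simp_all add: f_def w eigvec_zero)
  moreover have "w x = (\<Sum>e'\<in>spec L H. f e' x)" for x
    unfolding f_def using e finite_spec by simp
  ultimately show ?thesis unfolding eig_decomposable_def by blast
qed

lemma eig_decomposable_add:
  assumes "eig_decomposable v" "eig_decomposable u"
  shows "eig_decomposable (\<lambda>x. v x + u x)"
proof -
  obtain f where f: "\<forall>e\<in>spec L H. eigvec (of_real e) (f e)" "\<forall>x\<in>Pow L. v x = (\<Sum>e\<in>spec L H. f e x)"
    using assms(1) unfolding eig_decomposable_def by blast
  obtain g where g: "\<forall>e\<in>spec L H. eigvec (of_real e) (g e)" "\<forall>x\<in>Pow L. u x = (\<Sum>e\<in>spec L H. g e x)"
    using assms(2) unfolding eig_decomposable_def by blast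
  have "\<forall>e\<in>spec L H. eigvec (of_real e) (\<lambda>x. f e x + g e x)"
    using f(1) g(1) by (simp add: eigvec_def apply_op_add distrib_left)
  moreover have "\<forall>x\<in>Pow L. v x + u x = (\<Sum>e\<in>spec L H. f e x + g e x)"
    using f(2) g(2) by (simp add: sum.distrib)
  ultimately show ?thesis
    unfolding eig_decomposable_def by (intro exI[of _ "\<lambda>e x. f e x + g e x"]) simp
qed

lemma eigvec_poly_apply_not_root:
  assumes w: "eigvec z (poly_apply q v)" and x: "x \<in> Pow L" "poly_apply q v x \<noteq> 0"
  shows "poly q z \<noteq> 0"
proof
  assume "poly q z = 0"
  then obtain q' where q': "q = [:-z, 1:] * q'"
    using poly_eq_0_iff_dvd by (metis dvdE)
  have "poly_apply q v = (\<lambda>x. apply_op L H (poly_apply q' v) x - z * poly_apply q' v x)"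
    unfolding q' poly_apply_linear_factor ..
  moreover have "cnj z = z"
    using eigenvalue_real[OF w x] by (metis complex_cnj_complex_of_real)
  ultimately show False
    using no_generalized_eigvec[of z "poly_apply q' v" x] w x by simp
qed

text \<open>Induction on the degree of an annihilating polynomial q: split off a root z of q,
  q = (X - z) q1. Then w = q1(H) v is an eigenvector for z; if it vanishes, q1 annihilates v;
  otherwise z is real, z is not a root of q1 by the absence of Jordan blocks, and
  v - w / q1(z) is annihilated by q1.\<close>
lemma eig_decomposable_if_annihilated:
  "q \<noteq> 0 \<Longrightarrow> \<forall>x\<in>Pow L. poly_apply q v x = 0 \<Longrightarrow> eig_decomposable v"
proof (induction "degree q" arbitrary: q v rule: less_induct)
  case less
  show ?case
  proof (cases "degree q = 0")
    case True
    then obtain c where q: "q = [:c:]" by (rule degree_eq_zeroE)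
    then show ?thesis
      using less.prems by (intro eig_decomposable_zero) (auto simp: poly_apply_pCons apply_op_zero)
  next
    case False
    then have "\<not> constant (poly q)" using constant_degree[of q] by simp
    then obtain z where "poly q z = 0" using fundamental_theorem_of_algebra by blast
    then obtain q1 where q1: "q = [:-z, 1:] * q1"
      using poly_eq_0_iff_dvd by (metis dvdE)
    have q1nz: "q1 \<noteq> 0" using less.prems(1) q1 by auto
    have dq: "degree q1 < degree q" unfolding q1 using q1nz by (subst degree_mult_eq) auto
    define w where "w = poly_apply q1 v"
    have w: "eigvec z w"
      using less.prems(2) unfolding q1 poly_apply_linear_factor w_def eigvec_def by simp
    show ?thesis
    proof (cases "\<forall>x\<in>Pow L. w x = 0")
      case True
      then show ?thesis using less.hyps[OF dq q1nz] unfolding w_def by blast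
    next
      case False
      then obtain x0 where x0: "x0 \<in> Pow L" "w x0 \<noteq> 0" by blast
      define e where "e = Re z"
      have ze: "z = of_real e" unfolding e_def by (rule eigenvalue_real[OF w x0])
      have q1z: "poly q1 z \<noteq> 0"
        using eigvec_poly_apply_not_root w x0 unfolding w_def by blast
      define u where "u = (\<lambda>x. inverse (poly q1 z) * w x)"
      have u: "eigvec (of_real e) u"
        using w unfolding u_def eigvec_def ze by (simp add: apply_op_scale)
      have "\<forall>x\<in>Pow L. poly_apply q1 (\<lambda>x. v x - u x) x = 0"
        using poly_apply_eigvec[OF u] q1z ze by (simp add: poly_apply_diff u_def w_def)
      then have "eig_decomposable (\<lambda>x. (v x - u x) + u x)"
        using less.hyps[OF dq q1nz] eig_decomposable_add eig_decomposable_eigvec[OF u] by blast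
      then show ?thesis by simp
    qed
  qed
qed

lemma exists_annihilating_poly: "\<exists>q. q \<noteq> 0 \<and> (\<forall>x\<in>Pow L. poly_apply q v x = 0)"
proof -
  define N where "N = card (Pow L)"
  obtain c where c: "\<exists>j\<le>N. c j \<noteq> 0" "\<forall>x\<in>Pow L. (\<Sum>j\<le>N. c j * Hpow j v x) = 0"
    using linear_relation_on_small_domain[of "Pow L" N "\<lambda>j. Hpow j v"] finite_L
    unfolding N_def by auto
  define q where "q = (\<Sum>j\<le>N. monom (c j) j)"
  have cq: "coeff q j = (if j \<le> N then c j else 0)" for j
    unfolding q_def coeff_sum by (simp add: sum.delta)
  have "q \<noteq> 0" using c(1) cq by (metis coeff_0)
  moreover have dq: "degree q < Suc N" using degree_le[of N q] cq by fastforce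
  have "poly_apply q v x = (\<Sum>j\<le>N. c j * Hpow j v x)" for x
    unfolding poly_apply_eq_sum[OF dq] lessThan_Suc_atMost by (rule sum.cong) (auto simp: cq)
  ultimately show ?thesis using c(2) by auto
qed

theorem eig_decomposable_all: "eig_decomposable v"
  using exists_annihilating_poly[of v] eig_decomposable_if_annihilated by blast

lemma apply_opprod_shifts_eigvec:
  assumes w: "eigvec z w" and x: "x \<in> Pow L"
  shows "apply_op L (opprod L (map (\<lambda>e. opscale (a e) (opsub H (opscale (b e) idop))) es)) w x
     = (\<Prod>e\<leftarrow>es. a e * (z - b e)) * w x"
  using x
proof (induction es arbitrary: x)
  case Nil
  then show ?case by (simp add: opprod_def apply_op_idop[OF finite_L])
next
  case (Cons e es)
  define P where "P = opprod L (map (\<lambda>e. opscale (a e) (opsub H (opscale (b e) idop))) es)"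
  have "apply_op L (opscale (a e) (opsub H (opscale (b e) idop))) (apply_op L P w) x =
        apply_op L (opscale (a e) (opsub H (opscale (b e) idop))) (\<lambda>y. (\<Prod>e\<leftarrow>es. a e * (z - b e)) * w y) x"
    by (rule arg_cong[where f="\<lambda>v. v x"], rule apply_op_cong) (use Cons.IH in \<open>simp add: P_def\<close>)
  also have "\<dots> = (\<Prod>e\<leftarrow>e # es. a e * (z - b e)) * w x"
    using w Cons.prems unfolding eigvec_def apply_op_scale
    by (simp add: apply_op_opscale apply_op_opsub apply_op_idop[OF finite_L] algebra_simps)
  finally show ?case
    by (simp add: opprod_def apply_op_opmul P_def)
qed

lemma apply_specproj_eigvec:
  assumes e: "e \<in> spec L H" and f: "f \<in> spec L H" and w: "eigvec (of_real f) w" and x: "x \<in> Pow L"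
  shows "apply_op L (specproj L H e) w x = (if f = e then w x else 0)"
proof -
  define es where "es = sorted_list_of_set (spec L H - {e})"
  have ses: "set es = spec L H - {e}" unfolding es_def using finite_spec by simp
  have "apply_op L (specproj L H e) w x =
     (\<Prod>e'\<leftarrow>es. complex_of_real (1 / (e - e')) * (of_real f - of_real e')) * w x"
    unfolding specproj_def es_def[symmetric] by (rule apply_opprod_shifts_eigvec[OF w x])
  also have "\<dots> = (if f = e then w x else 0)"
  proof (cases "f = e")
    case True
    have "(\<Prod>e'\<leftarrow>es. complex_of_real (1 / (e - e')) * (of_real f - of_real e')) = 1"
      using True ses by (intro prod_list_eq_1) (auto simp: field_simps simp flip: of_real_diff)
    then show ?thesis using True by simp
  next
    case False
    then have "f \<in> set es" using ses f by auto
    then have "(\<Prod>e'\<leftarrow>es. complex_of_real (1 / (e - e')) * (of_real f - of_real e')) = 0"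
      unfolding prod_list_zero_iff by force
    then show ?thesis using False by simp
  qed
  finally show ?thesis .
qed

lemma apply_chi:
  assumes fv: "\<forall>e\<in>spec L H. eigvec (of_real e) (fv e)" "\<forall>x\<in>Pow L. v x = (\<Sum>e\<in>spec L H. fv e x)"
    and x: "x \<in> Pow L"
  shows "apply_op L (chi L I H) v x = (\<Sum>s\<in>spec L H \<inter> I. fv s x)"
proof -
  have "apply_op L (specproj L H s) v x = fv s x" if s: "s \<in> spec L H" for s
  proof -
    have "apply_op L (specproj L H s) v = apply_op L (specproj L H s) (\<lambda>y. \<Sum>e\<in>spec L H. fv e y)"
      by (rule apply_op_cong) (use fv in auto)
    then have "apply_op L (specproj L H s) v x = (\<Sum>e\<in>spec L H. apply_op L (specproj L H s) (fv e) x)"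
      by (simp add: apply_op_sum)
    also have "\<dots> = (\<Sum>e\<in>spec L H. if e = s then fv e x else 0)"
      by (rule sum.cong) (use apply_specproj_eigvec[OF s _ _ x] fv in auto)
    also have "\<dots> = fv s x" using s finite_spec by simp
    finally show ?thesis .
  qed
  then show ?thesis unfolding chi_def using finite_spec by (simp add: apply_op_opsum)
qed

lemma ip_sum_eigvecs:
  assumes F: "F \<subseteq> spec L H" and fv: "\<forall>e\<in>spec L H. eigvec (of_real e) (fv e)"
  shows "ip L (\<lambda>x. \<Sum>s\<in>F. fv s x) (\<lambda>x. \<Sum>s\<in>F. fv s x) = of_real (\<Sum>s\<in>F. (vnorm L (fv s))\<^sup>2)"
proof -
  have "ip L (\<lambda>x. \<Sum>s\<in>F. fv s x) (\<lambda>x. \<Sum>s\<in>F. fv s x) = (\<Sum>s\<in>F. \<Sum>t\<in>F. ip L (fv s) (fv t))"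
    by (simp add: ip_sum_left ip_sum_right)
  also have "\<dots> = (\<Sum>s\<in>F. \<Sum>t\<in>F. if t = s then ip L (fv s) (fv s) else 0)"
  proof (intro sum.cong refl)
    fix s t assume "s \<in> F" "t \<in> F"
    then show "ip L (fv s) (fv t) = (if t = s then ip L (fv s) (fv s) else 0)"
      using eigvec_orthogonal[of s "fv s" t "fv t"] fv F by auto
  qed
  also have "\<dots> = (\<Sum>s\<in>F. ip L (fv s) (fv s))"
    using finite_subset[OF F finite_spec] by simp
  finally show ?thesis by (simp add: ip_self)
qed

theorem opnorm_chi_le_1: "opnorm L (chi L I H) \<le> 1"
proof (rule opnorm_leI)
  fix v
  obtain fv where fv: "\<forall>e\<in>spec L H. eigvec (of_real e) (fv e)"
    "\<forall>x\<in>Pow L. v x = (\<Sum>e\<in>spec L H. fv e x)"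
    using eig_decomposable_all[of v] unfolding eig_decomposable_def by blast
  have "of_real ((vnorm L (apply_op L (chi L I H) v))\<^sup>2)
        = ip L (\<lambda>x. \<Sum>s\<in>spec L H \<inter> I. fv s x) (\<lambda>x. \<Sum>s\<in>spec L H \<inter> I. fv s x)"
    unfolding ip_self[symmetric] by (rule ip_cong) (simp_all add: apply_chi[OF fv])
  also have "\<dots> = of_real (\<Sum>s\<in>spec L H \<inter> I. (vnorm L (fv s))\<^sup>2)"
    by (rule ip_sum_eigvecs[OF _ fv(1)]) auto
  finally have chi_v: "(vnorm L (apply_op L (chi L I H) v))\<^sup>2 = (\<Sum>s\<in>spec L H \<inter> I. (vnorm L (fv s))\<^sup>2)"
    using of_real_eq_iff by blast
  have "of_real ((vnorm L v)\<^sup>2) = ip L (\<lambda>x. \<Sum>s\<in>spec L H. fv s x) (\<lambda>x. \<Sum>s\<in>spec L H. fv s x)"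
    unfolding ip_self[symmetric] by (rule ip_cong) (simp_all add: fv(2))
  also have "\<dots> = of_real (\<Sum>s\<in>spec L H. (vnorm L (fv s))\<^sup>2)"
    by (rule ip_sum_eigvecs[OF _ fv(1)]) auto
  finally have v: "(vnorm L v)\<^sup>2 = (\<Sum>s\<in>spec L H. (vnorm L (fv s))\<^sup>2)"
    using of_real_eq_iff by blast
  have "(\<Sum>s\<in>spec L H \<inter> I. (vnorm L (fv s))\<^sup>2) \<le> (\<Sum>s\<in>spec L H. (vnorm L (fv s))\<^sup>2)"
    by (rule sum_mono2[OF finite_spec]) auto
  then have "(vnorm L (apply_op L (chi L I H) v))\<^sup>2 \<le> (vnorm L v)\<^sup>2"
    using chi_v v by simp
  then show "vnorm L (apply_op L (chi L I H) v) \<le> 1 * vnorm L v"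
    using power2_le_imp_le vnorm_nonneg by auto
qed simp

end

section \<open>The Hamiltonian is Hermitian\<close>

lemma hermD:
  assumes "herm L A" "x \<in> Pow L" "y \<in> Pow L"
  shows "A x y = cnj (A y x)"
  using bspec[OF bspec[OF assms(1)[unfolded herm_def] assms(2)] assms(3)] .

lemma herm_opadd:
  assumes "herm L A" "herm L B"
  shows "herm L (opadd A B)"
  unfolding herm_def opadd_def
proof (intro ballI)
  fix x y assume "x \<in> Pow L" "y \<in> Pow L"
  then show "A x y + B x y = cnj (A y x + B y x)"
    using hermD[OF assms(1), of x y] hermD[OF assms(2), of x y] by simp
qed

lemma herm_opsub:
  assumes "herm L A" "herm L B"
  shows "herm L (opsub A B)"
  unfolding herm_def opsub_def
proof (intro ballI)
  fix x y assume "x \<in> Pow L" "y \<in> Pow L"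
  then show "A x y - B x y = cnj (A y x - B y x)"
    using hermD[OF assms(1), of x y] hermD[OF assms(2), of x y] by simp
qed

lemma herm_opscale:
  assumes "herm L A"
  shows "herm L (opscale (complex_of_real r) A)"
  unfolding herm_def opscale_def
proof (intro ballI)
  fix x y assume "x \<in> Pow L" "y \<in> Pow L"
  then show "complex_of_real r * A x y = cnj (complex_of_real r * A y x)"
    using hermD[OF assms(1), of x y] by simp
qed

lemma herm_opsum:
  assumes "\<And>i. i \<in> I \<Longrightarrow> herm L (F i)"
  shows "herm L (opsum F I)"
  unfolding herm_def opsum_def
proof (intro ballI)
  fix x y assume "x \<in> Pow L" "y \<in> Pow L"
  then have "(\<Sum>i\<in>I. F i x y) = (\<Sum>i\<in>I. cnj (F i y x))"
    by (intro sum.cong refl hermD[OF assms]) auto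
  then show "(\<Sum>i\<in>I. F i x y) = cnj (\<Sum>i\<in>I. F i y x)" by (simp add: cnj_sum)
qed

lemma herm_occN: "herm L (occN i)"
  unfolding herm_def occN_def by auto

lemma opmul_occN:
  assumes f: "finite L" and x: "x \<in> Pow L"
  shows "opmul L (occN i) (occN j) x y = (if x = y \<and> i \<in> x \<and> j \<in> x then 1 else 0)"
proof -
  have "opmul L (occN i) (occN j) x y = (\<Sum>z\<in>Pow L. if z = x then (if x = y \<and> i \<in> x \<and> j \<in> x then 1 else 0) else 0)"
    unfolding opmul_def occN_def by (rule sum.cong) auto
  also have "\<dots> = (if x = y \<and> i \<in> x \<and> j \<in> x then 1 else 0)" using x f
    by (simp add: sum.delta)
  finally show ?thesis .
qed

lemma herm_occN_occN: "finite L \<Longrightarrow> herm L (opmul L (occN i) (occN j))"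
  unfolding herm_def by (auto simp: opmul_occN)

lemma opmul_sigm:
  assumes f: "finite L" and y: "y \<in> Pow L" and j: "j \<in> L"
  shows "opmul L A (sigm j) x y = (if j \<notin> y then A x (insert j y) else 0)"
proof -
  have "opmul L A (sigm j) x y = (\<Sum>z\<in>Pow L. if z = insert j y then (if j \<notin> y then A x (insert j y) else 0) else 0)"
    unfolding opmul_def sigm_def by (rule sum.cong) auto
  also have "\<dots> = (if j \<notin> y then A x (insert j y) else 0)" using y j f by (simp add: sum.delta)
  finally show ?thesis .
qed

lemma opmul_sigp:
  assumes f: "finite L" and y: "y \<in> Pow L"
  shows "opmul L A (sigp j) x y = (if j \<in> y then A x (y - {j}) else 0)"
proof -
  have "opmul L A (sigp j) x y = (\<Sum>z\<in>Pow L. if z = y - {j} then (if j \<in> y then A x (y - {j}) else 0) else 0)"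
    unfolding opmul_def sigp_def by (rule sum.cong) auto
  also have "\<dots> = (if j \<in> y then A x (y - {j}) else 0)" using y f by (auto simp: sum.delta)
  finally show ?thesis .
qed

lemma herm_hopping:
  assumes f: "finite L" and i: "i \<in> L" "i + 1 \<in> L"
  shows "herm L (opadd (opmul L (sigp i) (sigm (i+1))) (opmul L (sigm i) (sigp (i+1))))"
  unfolding herm_def opadd_def
proof (intro ballI)
  fix x y assume x: "x \<in> Pow L" and y: "y \<in> Pow L"
  have e1: "opmul L (sigp i) (sigm (i+1)) x y =
      (if i+1 \<notin> y \<and> i \<in> y \<and> x = insert (i+1) y - {i} then 1 else 0)"
    using opmul_sigm[OF f y i(2)] by (auto simp: sigp_def)
  have e2: "opmul L (sigm i) (sigp (i+1)) x y =
      (if i+1 \<in> y \<and> i \<notin> y \<and> x = insert i (y - {i+1}) then 1 else 0)"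
    using opmul_sigp[OF f y] by (auto simp: sigm_def)
  have e3: "opmul L (sigp i) (sigm (i+1)) y x =
      (if i+1 \<notin> x \<and> i \<in> x \<and> y = insert (i+1) x - {i} then 1 else 0)"
    using opmul_sigm[OF f x i(2)] by (auto simp: sigp_def)
  have e4: "opmul L (sigm i) (sigp (i+1)) y x =
      (if i+1 \<in> x \<and> i \<notin> x \<and> y = insert i (x - {i+1}) then 1 else 0)"
    using opmul_sigp[OF f x] by (auto simp: sigm_def)
  have q1: "(i+1 \<notin> y \<and> i \<in> y \<and> x = insert (i+1) y - {i}) \<longleftrightarrow>
            (i+1 \<in> x \<and> i \<notin> x \<and> y = insert i (x - {i+1}))" by auto
  have q2: "(i+1 \<in> y \<and> i \<notin> y \<and> x = insert i (y - {i+1})) \<longleftrightarrow>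
            (i+1 \<notin> x \<and> i \<in> x \<and> y = insert (i+1) x - {i})" by auto
  show "opmul L (sigp i) (sigm (i + 1)) x y + opmul L (sigm i) (sigp (i + 1)) x y =
        cnj (opmul L (sigp i) (sigm (i + 1)) y x + opmul L (sigm i) (sigp (i + 1)) y x)"
    unfolding e1 e2 e3 e4 q1 q2 by simp
qed

lemma herm_Ham:
  assumes f: "finite L"
  shows "herm L (Ham L Del lam \<omega>)"
proof -
  have neg: "opscale (-1) A = opscale (complex_of_real (-1)) A" for A
    by simp
  show ?thesis
    unfolding Ham_def hterm_def neg
    by (intro herm_opadd herm_opsum herm_opsub herm_opscale herm_occN_occN[OF f] herm_hopping[OF f]
        herm_occN) auto
qed

section \<open>Diagonal operators and the decomposition of T\<close>

definition diag_op :: "(cfg \<Rightarrow> complex) \<Rightarrow> op" where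
  "diag_op f = (\<lambda>x y. if x = y then f x else 0)"

definition vacant :: "int set \<Rightarrow> cfg \<Rightarrow> complex" where
  "vacant S x = (if x \<inter> S = {} then 1 else 0)"

definition occupied_all :: "(nat \<Rightarrow> int set) \<Rightarrow> nat \<Rightarrow> cfg \<Rightarrow> complex" where
  "occupied_all A j y = (\<Prod>i\<leftarrow>[1..<j]. 1 - vacant (A i) y)"

lemma Pplus_eq_diag_op: "Pplus S = diag_op (vacant S)"
  unfolding Pplus_def diag_op_def vacant_def by (intro ext) auto

lemma Pminus_eq_diag_op: "Pminus S = diag_op (\<lambda>x. 1 - vacant S x)"
  unfolding Pminus_def Pplus_def diag_op_def vacant_def opsub_def idop_def by (intro ext) auto

lemma opmul_diag_op_right:
  assumes f: "finite L" and y: "y \<in> Pow L" and B: "\<And>z. z \<in> Pow L \<Longrightarrow> B z y = diag_op g z y"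
  shows "opmul L A B x y = A x y * g y"
proof -
  have "opmul L A B x y = (\<Sum>z\<in>Pow L. if z = y then A x y * g y else 0)"
    unfolding opmul_def by (rule sum.cong) (auto simp: B diag_op_def)
  also have "\<dots> = A x y * g y" using f y by (simp add: sum.delta)
  finally show ?thesis .
qed

lemma opmul_diag_op_left:
  assumes f: "finite L" and x: "x \<in> Pow L" and B: "\<And>z. z \<in> Pow L \<Longrightarrow> B x z = diag_op g x z"
  shows "opmul L B A x y = g x * A x y"
proof -
  have "opmul L B A x y = (\<Sum>z\<in>Pow L. if z = x then g x * A x y else 0)"
    unfolding opmul_def by (rule sum.cong) (auto simp: B diag_op_def)
  also have "\<dots> = g x * A x y" using f x by (simp add: sum.delta)
  finally show ?thesis .
qed

lemma opprod_diag_op: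
  assumes "finite L" "x \<in> Pow L"
  shows "opprod L (map (\<lambda>i. diag_op (f i)) is) x y = diag_op (\<lambda>x. \<Prod>i\<leftarrow>is. f i x) x y"
  using assms(2)
proof (induction "is" arbitrary: x y)
  case Nil
  then show ?case by (simp add: opprod_def idop_def diag_op_def)
next
  case (Cons i "is")
  have "opprod L (map (\<lambda>i. diag_op (f i)) (i # is)) x y = opmul L (diag_op (f i)) (opprod L (map (\<lambda>i. diag_op (f i)) is)) x y"
    by (simp add: opprod_def)
  also have "\<dots> = f i x * opprod L (map (\<lambda>i. diag_op (f i)) is) x y"
    by (rule opmul_diag_op_left[OF assms(1) Cons.prems]) simp
  also have "\<dots> = diag_op (\<lambda>x. \<Prod>i\<leftarrow>i # is. f i x) x y"
    using Cons.IH[OF Cons.prems] by (simp add: diag_op_def)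
  finally show ?case .
qed

lemma opprod_Pminus: "finite L \<Longrightarrow> x \<in> Pow L \<Longrightarrow>
  opprod L (map (\<lambda>i. Pminus (A i)) [1..<j]) x y = diag_op (occupied_all A j) x y"
  unfolding Pminus_eq_diag_op occupied_all_def by (rule opprod_diag_op)

lemma supp_in_diag_commute:
  assumes T: "supp_in L X T" and g: "\<And>x y. x \<in> Pow L \<Longrightarrow> y \<in> Pow L \<Longrightarrow> x - X = y - X \<Longrightarrow> g x = g y"
    and x: "x \<in> Pow L" and y: "y \<in> Pow L"
  shows "g x * T x y = T x y * (g y :: complex)"
proof -
  obtain B where B: "\<forall>x\<in>Pow L. \<forall>y\<in>Pow L. T x y = (if x - X = y - X then B (x \<inter> X) (y \<inter> X) else 0)"
    using T unfolding supp_in_def by blast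
  show ?thesis
  proof (cases "x - X = y - X")
    case True then show ?thesis using g[OF x y] by simp
  next
    case False then show ?thesis using B x y by simp
  qed
qed

lemma vacant_cong:
  assumes "S \<inter> X = {}" and "x - X = y - X"
  shows "vacant S x = vacant S y"
proof -
  have "x \<inter> S = (x - X) \<inter> S" "y \<inter> S = (y - X) \<inter> S"
    using assms(1) by auto
  then show ?thesis unfolding vacant_def using assms(2) by simp
qed

lemma occupied_all_cong:
  assumes "\<And>i. i \<in> set [1..<j] \<Longrightarrow> A i \<inter> X = {}" and "x - X = y - X"
  shows "occupied_all A j x = occupied_all A j y"
  unfolding occupied_all_def using vacant_cong[OF assms(1) assms(2)]
  by (intro arg_cong[where f=prod_list] map_cong) auto

lemma supp_in_mult_diag:
  assumes T: "supp_in L X T" and XS: "X \<subseteq> S" and SL: "S \<subseteq> L"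
    and d: "\<And>y. y \<in> Pow L \<Longrightarrow> d y = d (y \<inter> S)"
    and R: "\<And>x y. x \<in> Pow L \<Longrightarrow> y \<in> Pow L \<Longrightarrow> R x y = T x y * d y"
  shows "supp_in L S R"
proof -
  obtain B where B: "\<forall>x\<in>Pow L. \<forall>y\<in>Pow L. T x y = (if x - X = y - X then B (x \<inter> X) (y \<inter> X) else 0)"
    using T unfolding supp_in_def by blast
  define B' where "B' u w = (if u - X = w - X then B (u \<inter> X) (w \<inter> X) else 0) * d w" for u w
  have "R x y = (if x - S = y - S then B' (x \<inter> S) (y \<inter> S) else 0)" if x: "x \<in> Pow L" and y: "y \<in> Pow L" for x y
  proof (cases "x - S = y - S")
    case True
    have e1: "(x - X = y - X) = (x \<inter> S - X = y \<inter> S - X)"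
    proof
      assume "x - X = y - X"
      then show "x \<inter> S - X = y \<inter> S - X" by blast
    next
      assume h: "x \<inter> S - X = y \<inter> S - X"
      have "x - X = (x \<inter> S - X) \<union> (x - S)" "y - X = (y \<inter> S - X) \<union> (y - S)" using XS by auto
      then show "x - X = y - X" using h True by simp
    qed
    have e2: "x \<inter> S \<inter> X = x \<inter> X" "y \<inter> S \<inter> X = y \<inter> X" using XS by auto
    show ?thesis using True R[OF x y] B x y d[OF y] unfolding B'_def e1[symmetric] e2 by simp
  next
    case False
    then have "x - X \<noteq> y - X" using XS by blast
    then show ?thesis using False R[OF x y] B x y by simp
  qed
  then show ?thesis unfolding supp_in_def using SL by blast
qed

lemma sum_prod_telescope:
  "(\<Sum>j\<in>{1..n}. (p j :: complex) * (\<Prod>i\<leftarrow>[1..<j]. 1 - p i)) = 1 - (\<Prod>i\<leftarrow>[1..<Suc n]. 1 - p i)"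
proof (induction n)
  case 0
  then show ?case by simp
next
  case (Suc n)
  have "(\<Sum>j\<in>{1..Suc n}. p j * (\<Prod>i\<leftarrow>[1..<j]. 1 - p i)) =
        (\<Sum>j\<in>{1..n}. p j * (\<Prod>i\<leftarrow>[1..<j]. 1 - p i)) + p (Suc n) * (\<Prod>i\<leftarrow>[1..<Suc n]. 1 - p i)"
    by simp
  also have "\<dots> = 1 - (\<Prod>i\<leftarrow>[1..<Suc (Suc n)]. 1 - p i)"
    unfolding Suc.IH by (simp add: algebra_simps)
  finally show ?case .
qed

text \<open>Tpart L T A j and Trest L T A j are the paper's T_j and T P-(A 1) \<dots> P-(A (j - 1)).\<close>

definition Trest :: "int set \<Rightarrow> op \<Rightarrow> (nat \<Rightarrow> int set) \<Rightarrow> nat \<Rightarrow> op" where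
  "Trest L T A = (\<lambda>j. opmul L T (opprod L (map (\<lambda>i. Pminus (A i)) [1..<j])))"

definition Tpart :: "int set \<Rightarrow> op \<Rightarrow> (nat \<Rightarrow> int set) \<Rightarrow> nat \<Rightarrow> op" where
  "Tpart L T A = (\<lambda>j. opmul L (opmul L T (Pplus (A j))) (opprod L (map (\<lambda>i. Pminus (A i)) [1..<j])))"

lemma Trest_apply: "finite L \<Longrightarrow> y \<in> Pow L \<Longrightarrow> Trest L T A j x y = T x y * occupied_all A j y"
  unfolding Trest_def by (rule opmul_diag_op_right, assumption+, rule opprod_Pminus)

lemma Tpart_apply:
  assumes L: "finite L" and y: "y \<in> Pow L"
  shows "Tpart L T A j x y = T x y * vacant (A j) y * occupied_all A j y"
proof -
  have "Tpart L T A j x y = opmul L T (Pplus (A j)) x y * occupied_all A j y"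
    unfolding Tpart_def by (rule opmul_diag_op_right[OF L y], rule opprod_Pminus[OF L])
  also have "opmul L T (Pplus (A j)) x y = T x y * vacant (A j) y"
    by (rule opmul_diag_op_right[OF L y]) (simp add: Pplus_eq_diag_op)
  finally show ?thesis .
qed

lemma T_minus_sum_Tpart:
  assumes L: "finite L"
  shows "opeq L (opsub T (opsum (Tpart L T A) {1..n})) (Trest L T A (Suc n))"
  unfolding opeq_def
proof (intro ballI)
  fix x y assume y: "y \<in> Pow L"
  have "opsub T (opsum (Tpart L T A) {1..n}) x y
        = T x y - (\<Sum>j\<in>{1..n}. T x y * (vacant (A j) y * occupied_all A j y))"
    unfolding opsub_def opsum_def Tpart_apply[OF L y] by (simp add: mult.assoc)
  also have "\<dots> = T x y * (1 - (\<Sum>j\<in>{1..n}. vacant (A j) y * (\<Prod>i\<leftarrow>[1..<j]. 1 - vacant (A i) y)))"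
    unfolding occupied_all_def by (simp add: sum_distrib_left algebra_simps)
  also have "\<dots> = T x y * occupied_all A (Suc n) y"
    unfolding sum_prod_telescope occupied_all_def by simp
  finally show "opsub T (opsum (Tpart L T A) {1..n}) x y = Trest L T A (Suc n) x y"
    unfolding Trest_apply[OF L y] .
qed

locale supported_op =
  fixes L X :: "int set" and T :: op
  assumes finite_L: "finite L" and T: "supp_in L X T"
begin

lemma Tpart_sandwich:
  assumes AX: "A j \<inter> X = {}"
  shows "opeq L (Tpart L T A j) (opmul L (opmul L (Pplus (A j)) (Tpart L T A j)) (Pplus (A j)))"
  unfolding opeq_def
proof (intro ballI)
  fix x y assume x: "x \<in> Pow L" and y: "y \<in> Pow L"
  have "opmul L (opmul L (Pplus (A j)) (Tpart L T A j)) (Pplus (A j)) x y = opmul L (Pplus (A j)) (Tpart L T A j) x y * vacant (A j) y"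
    by (rule opmul_diag_op_right[OF finite_L y]) (simp add: Pplus_eq_diag_op)
  also have "opmul L (Pplus (A j)) (Tpart L T A j) x y = vacant (A j) x * Tpart L T A j x y"
    by (rule opmul_diag_op_left[OF finite_L x]) (simp add: Pplus_eq_diag_op)
  moreover have c: "vacant (A j) x * T x y = T x y * vacant (A j) y"
    by (rule supp_in_diag_commute[OF T _ x y]) (rule vacant_cong[OF AX])
  ultimately have r: "opmul L (opmul L (Pplus (A j)) (Tpart L T A j)) (Pplus (A j)) x y =
      (vacant (A j) x * T x y) * (vacant (A j) y * vacant (A j) y) * occupied_all A j y"
    unfolding Tpart_apply[OF finite_L y] by (simp add: ac_simps)
  show "Tpart L T A j x y = opmul L (opmul L (Pplus (A j)) (Tpart L T A j)) (Pplus (A j)) x y"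
    unfolding r Tpart_apply[OF finite_L y] c by (cases "y \<inter> A j = {}") (simp_all add: vacant_def)
qed

lemma Tpart_factor:
  assumes AX: "A j \<inter> X = {}" and AU: "A j = Ain \<union> Aout"
  shows "opeq L (Tpart L T A j) (opmul L (opmul L (Pplus Aout) (Pplus Ain)) (Trest L T A j))"
  unfolding opeq_def
proof (intro ballI)
  fix x y assume x: "x \<in> Pow L" and y: "y \<in> Pow L"
  have "opmul L (opmul L (Pplus Aout) (Pplus Ain)) (Trest L T A j) x y = (vacant Aout x * vacant Ain x) * Trest L T A j x y"
  proof (rule opmul_diag_op_left[OF finite_L x])
    fix z assume z: "z \<in> Pow L"
    show "opmul L (Pplus Aout) (Pplus Ain) x z = diag_op (\<lambda>x. vacant Aout x * vacant Ain x) x z"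
      by (subst opmul_diag_op_left[OF finite_L x, of _ "vacant Aout"]) (auto simp: Pplus_eq_diag_op diag_op_def)
  qed
  also have "vacant Aout x * vacant Ain x = vacant (A j) x" unfolding AU vacant_def by auto
  finally have h1: "opmul L (opmul L (Pplus Aout) (Pplus Ain)) (Trest L T A j) x y = vacant (A j) x * Trest L T A j x y" .
  have c: "vacant (A j) x * T x y = T x y * vacant (A j) y"
    by (rule supp_in_diag_commute[OF T _ x y]) (rule vacant_cong[OF AX])
  show "Tpart L T A j x y = opmul L (opmul L (Pplus Aout) (Pplus Ain)) (Trest L T A j) x y"
    unfolding Tpart_apply[OF finite_L y] h1 Trest_apply[OF finite_L y] by (metis c mult.assoc)
qed

lemma Trest_commute:
  assumes AX: "\<And>i. i \<in> set [1..<j] \<Longrightarrow> A i \<inter> X = {}"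
  shows "opeq L (Trest L T A j) (opmul L (opprod L (map (\<lambda>i. Pminus (A i)) [1..<j])) T)"
  unfolding opeq_def
proof (intro ballI)
  fix x y assume x: "x \<in> Pow L" and y: "y \<in> Pow L"
  have "opmul L (opprod L (map (\<lambda>i. Pminus (A i)) [1..<j])) T x y = occupied_all A j x * T x y"
    by (rule opmul_diag_op_left[OF finite_L x], rule opprod_Pminus[OF finite_L x])
  also have "\<dots> = T x y * occupied_all A j y"
    by (rule supp_in_diag_commute[OF T _ x y]) (rule occupied_all_cong[OF AX])
  finally show "Trest L T A j x y = opmul L (opprod L (map (\<lambda>i. Pminus (A i)) [1..<j])) T x y"
    unfolding Trest_apply[OF finite_L y] ..
qed

lemma supp_in_Tpart:
  assumes XS: "X \<subseteq> S" and SL: "S \<subseteq> L" and AS: "\<And>i. i \<in> set [1..<Suc j] \<Longrightarrow> A i \<subseteq> S"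
    and j1: "1 \<le> j"
  shows "supp_in L S (Tpart L T A j)"
proof (rule supp_in_mult_diag[OF T XS SL])
  fix y assume y: "y \<in> Pow L"
  have "y \<inter> A i = (y \<inter> S) \<inter> A i" if "i \<in> set [1..<Suc j]" for i using AS[OF that] by auto
  moreover have "j \<in> set [1..<Suc j]" using j1 by auto
  ultimately show "vacant (A j) y * occupied_all A j y = vacant (A j) (y \<inter> S) * occupied_all A j (y \<inter> S)"
    unfolding vacant_def occupied_all_def by (auto intro!: arg_cong[where f=prod_list])
next
  fix x y assume "x \<in> Pow L" "y \<in> Pow L"
  then show "Tpart L T A j x y = T x y * (vacant (A j) y * occupied_all A j y)" by (simp add: Tpart_apply[OF finite_L] mult.assoc)
qed

lemma supp_in_Trest:
  assumes XS: "X \<subseteq> S" and SL: "S \<subseteq> L" and AS: "\<And>i. i \<in> set [1..<j] \<Longrightarrow> A i \<subseteq> S"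
  shows "supp_in L S (Trest L T A j)"
proof (rule supp_in_mult_diag[OF T XS SL])
  fix y assume y: "y \<in> Pow L"
  have "y \<inter> A i = (y \<inter> S) \<inter> A i" if "i \<in> set [1..<j]" for i using AS[OF that] by auto
  then show "occupied_all A j y = occupied_all A j (y \<inter> S)"
    unfolding vacant_def occupied_all_def by (auto intro!: arg_cong[where f=prod_list])
next
  fix x y assume "x \<in> Pow L" "y \<in> Pow L"
  then show "Trest L T A j x y = T x y * occupied_all A j y" by (simp add: Trest_apply[OF finite_L])
qed

end
section \<open>Geometry of the annuli\<close>

lemma nbhd_interval:
  assumes "lo \<le> hi"
  shows "nbhd L {lo..hi} t = {x\<in>L. lo - int t \<le> x \<and> x \<le> hi + int t}"
proof (intro set_eqI iffI)
  fix x assume "x \<in> nbhd L {lo..hi} t"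
  then show "x \<in> {x\<in>L. lo - int t \<le> x \<and> x \<le> hi + int t}" unfolding nbhd_def by auto
next
  fix x assume x: "x \<in> {x\<in>L. lo - int t \<le> x \<and> x \<le> hi + int t}"
  define y where "y = max lo (min hi x)"
  have "y \<in> {lo..hi}" "\<bar>x - y\<bar> \<le> int t" using x assms unfolding y_def by auto
  then show "x \<in> nbhd L {lo..hi} t" using x unfolding nbhd_def by blast
qed

lemma nbhd_intervalD: "x \<in> nbhd L {c..d} t \<Longrightarrow> c - int t \<le> x \<and> x \<le> d + int t \<and> x \<in> L"
  unfolding nbhd_def by auto

lemma nbhd_intervalI: "x \<in> L \<Longrightarrow> c \<le> d \<Longrightarrow> c - int t \<le> x \<Longrightarrow> x \<le> d + int t \<Longrightarrow> x \<in> nbhd L {c..d} t"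
  using nbhd_interval[of c d L t] by auto

lemma bd_in_interval:
  assumes L: "L = {a..b}" and lo: "a \<le> lo - 1" and hi: "hi + 1 \<le> b"
  shows "bd_in L t {lo..hi} = {x. lo \<le> x \<and> x \<le> hi \<and> (x \<le> lo - 1 + int t \<or> hi + 1 - int t \<le> x)}"
proof (intro set_eqI iffI)
  fix x assume "x \<in> bd_in L t {lo..hi}"
  then obtain y where "lo \<le> x" "x \<le> hi" "y \<in> L" "y \<notin> {lo..hi}" "\<bar>x - y\<bar> \<le> int t"
    unfolding bd_in_def by auto
  then show "x \<in> {x. lo \<le> x \<and> x \<le> hi \<and> (x \<le> lo - 1 + int t \<or> hi + 1 - int t \<le> x)}" by auto
next
  fix x assume x: "x \<in> {x. lo \<le> x \<and> x \<le> hi \<and> (x \<le> lo - 1 + int t \<or> hi + 1 - int t \<le> x)}"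
  show "x \<in> bd_in L t {lo..hi}"
  proof (cases "x \<le> lo - 1 + int t")
    case True
    then have "lo - 1 \<in> L - {lo..hi}" "\<bar>x - (lo - 1)\<bar> \<le> int t" using x L lo hi by auto
    moreover have "x \<in> {lo..hi}" using x by auto
    ultimately show ?thesis unfolding bd_in_def mem_Collect_eq by blast
  next
    case False
    then have "hi + 1 \<in> L - {lo..hi}" "\<bar>x - (hi + 1)\<bar> \<le> int t" using x L lo hi by auto
    moreover have "x \<in> {lo..hi}" using x by auto
    ultimately show ?thesis unfolding bd_in_def mem_Collect_eq by blast
  qed
qed

lemma Upsilon_two_intervals_le:
  assumes ab: "\<alpha> \<le> \<beta>" and gap: "\<beta> + 1 < \<gamma>" and gd: "\<gamma> \<le> \<delta>"
  shows "Upsilon ({\<alpha>..\<beta>} \<union> {\<gamma>..\<delta>}) \<le> 2"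
proof -
  define S where "S = {\<alpha>..\<beta>} \<union> {\<gamma>..\<delta>}"
  define U where "U = {I. fin_interval I \<and> I \<subseteq> S \<and> (\<forall>J. fin_interval J \<and> I \<subseteq> J \<and> J \<subseteq> S \<longrightarrow> J = I)}"
  have "U \<subseteq> {{\<alpha>..\<beta>}, {\<gamma>..\<delta>}}"
  proof
    fix I assume "I \<in> U"
    then have fi: "fin_interval I" and IS: "I \<subseteq> S"
      and mx: "\<And>J. fin_interval J \<Longrightarrow> I \<subseteq> J \<Longrightarrow> J \<subseteq> S \<Longrightarrow> J = I"
      unfolding U_def by blast+
    obtain p q where pq: "p \<le> q" "I = {p..q}" using fi unfolding fin_interval_def by blast
    have pS: "p \<in> S" using IS pq by auto
    show "I \<in> {{\<alpha>..\<beta>}, {\<gamma>..\<delta>}}"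
    proof (cases "p \<le> \<beta>")
      case True
      have "q \<le> \<beta>"
      proof (rule ccontr)
        assume "\<not> q \<le> \<beta>"
        then have "\<beta> + 1 \<in> I" using pq True by auto
        then show False using IS gap unfolding S_def by auto
      qed
      then have "I \<subseteq> {\<alpha>..\<beta>}" using pq pS True gap unfolding S_def by auto
      moreover have "fin_interval {\<alpha>..\<beta>}" using ab unfolding fin_interval_def by blast
      ultimately have "{\<alpha>..\<beta>} = I" using mx unfolding S_def by blast
      then show ?thesis by simp
    next
      case False
      then have "\<gamma> \<le> p" using pS unfolding S_def by auto
      moreover have "q \<in> S" using IS pq by auto
      ultimately have "q \<le> \<delta>" using pq gap unfolding S_def by auto
      then have "I \<subseteq> {\<gamma>..\<delta>}" using pq \<open>\<gamma> \<le> p\<close> by auto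
      moreover have "fin_interval {\<gamma>..\<delta>}" using gd unfolding fin_interval_def by blast
      ultimately have "{\<gamma>..\<delta>} = I" using mx unfolding S_def by blast
      then show ?thesis by simp
    qed
  qed
  then have "card U \<le> card {{\<alpha>..\<beta>}, {\<gamma>..\<delta>}}" by (intro card_mono) auto
  also have "\<dots> \<le> 2" by (simp add: card_insert_if)
  finally show ?thesis unfolding Upsilon_def U_def S_def .
qed




lemma setdist_interval_complement:
  assumes L_eq: "L = {a..b}" and X_eq: "X = {c..d}" and cd: "c \<le> d" and XL: "X \<subseteq> L"
    and sd: "setdist X (- L) > r"
  shows "r < real_of_int (c - a + 1) \<and> r < real_of_int (b + 1 - d)"
proof -
  let ?S = "{real_of_int \<bar>x - y\<bar> | x y. x \<in> X \<and> y \<in> - L}"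
  have bdd: "bdd_below ?S" by (rule bdd_belowI[of _ 0]) auto
  have ca: "c \<ge> a" "d \<le> b" using XL cd unfolding L_eq X_eq by auto
  have "real_of_int \<bar>c - (a - 1)\<bar> \<in> ?S"
    by (rule CollectI, rule exI[of _ c], rule exI[of _ "a - 1"]) (use cd in \<open>auto simp: L_eq X_eq\<close>)
  then have "setdist X (- L) \<le> real_of_int \<bar>c - (a - 1)\<bar>" unfolding setdist_def by (rule cInf_lower[OF _ bdd])
  moreover have "real_of_int \<bar>d - (b + 1)\<bar> \<in> ?S"
    by (rule CollectI, rule exI[of _ d], rule exI[of _ "b + 1"]) (use cd in \<open>auto simp: L_eq X_eq\<close>)
  then have "setdist X (- L) \<le> real_of_int \<bar>d - (b + 1)\<bar>" unfolding setdist_def by (rule cInf_lower[OF _ bdd])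
  ultimately show ?thesis using sd ca by auto
qed

lemma bd_out_disjoint_bd_in: "bd_out L s M \<inter> bd_in L s M = {}"
  unfolding bd_out_def bd_in_def by auto

lemma subset_nbhd: "M \<subseteq> L \<Longrightarrow> M \<subseteq> nbhd L M t"
  unfolding nbhd_def by force

lemma nbhd_subset: "nbhd L M t \<subseteq> L"
  unfolding nbhd_def by auto

definition annulus :: "int set \<Rightarrow> int set \<Rightarrow> nat \<Rightarrow> nat \<Rightarrow> int set" where
  "annulus L X l = (\<lambda>i. bd L (3*l) (nbhd L X (9*i*l)))"

locale annuli =
  fixes L X :: "int set" and a b c d :: int and l k :: nat
  assumes L_eq: "L = {a..b}" and X_eq: "X = {c..d}" and cd: "c \<le> d" and l1: "l \<ge> 1"
    and farL: "c - a \<ge> int (9 * (k+1) * l) + 1" and farR: "b - d \<ge> int (9 * (k+1) * l) + 1"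
begin

definition rad :: "nat \<Rightarrow> int" where
  "rad i = int (9*i*l)"

definition rad_max :: int where
  "rad_max = int (9 * (k+1) * l)"

lemma margins: "c - a \<ge> rad_max + 1" "b - d \<ge> rad_max + 1"
  using farL farR unfolding rad_max_def by auto

lemma int_l: "int (3*l) = 3 * int l" "int l \<ge> 1"
  using l1 by auto

lemma rad_bounds:
  assumes i: "1 \<le> i" "i \<le> k+1"
  shows "9 * int l \<le> rad i" "rad i \<le> rad_max"
proof -
  have "9*l \<le> 9*i*l" "9*i*l \<le> 9*(k+1)*l" using i by (simp_all add: mult_le_mono1 mult_le_mono2)
  then show "9 * int l \<le> rad i" "rad i \<le> rad_max" unfolding rad_def rad_max_def by linarith+
qed

lemma rad_gap: "i < j \<Longrightarrow> rad i + 9 * int l \<le> rad j"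
proof -
  assume "i < j"
  then have "9*(i+1)*l \<le> 9*j*l" by (intro mult_le_mono1) auto
  moreover have "9*(i+1)*l = 9*i*l + 9*l" by (simp add: add_mult_distrib2 add_mult_distrib)
  ultimately have "int (9*i*l) + int (9*l) \<le> int (9*j*l)" by (simp only: of_nat_add[symmetric] of_nat_le_iff)
  then show ?thesis unfolding rad_def by simp
qed

lemma rad_inner: "1 \<le> j \<Longrightarrow> int ((9*j-6)*l) = rad j - 6 * int l"
proof -
  assume j: "1 \<le> j"
  have "(9*j-6)*l + 6*l = 9*j*l" using j by (simp add: diff_mult_distrib)
  then have "int ((9*j-6)*l) + int (6*l) = int (9*j*l)" by (simp only: of_nat_add[symmetric] of_nat_eq_iff)
  then show ?thesis unfolding rad_def by simp
qed

lemma rad_outer: "int ((9*j+3)*l) = rad j + 3 * int l"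
proof -
  have "(9*j+3)*l = 9*j*l + 3*l" by (simp add: add_mult_distrib)
  then have "int ((9*j+3)*l) = int (9*j*l) + int (3*l)" by (simp only: of_nat_add[symmetric])
  then show ?thesis unfolding rad_def by simp
qed

lemma nbhd_X_eq:
  assumes i: "1 \<le> i" "i \<le> k+1"
  shows "nbhd L X (9*i*l) = {c - rad i .. d + rad i}"
proof -
  have e: "nbhd L X (9*i*l) = {x\<in>L. c - rad i \<le> x \<and> x \<le> d + rad i}"
    unfolding X_eq nbhd_interval[OF cd] rad_def ..
  have h: "9 * int l \<le> rad i" "rad i \<le> rad_max" using rad_bounds[OF i] .
  show ?thesis unfolding e
  proof (intro set_eqI)
    fix x show "x \<in> {x \<in> L. c - rad i \<le> x \<and> x \<le> d + rad i} \<longleftrightarrow> x \<in> {c - rad i..d + rad i}"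
      unfolding L_eq mem_Collect_eq atLeastAtMost_iff using h margins int_l(2) by linarith
  qed
qed

lemma bd_out_nbhd_X_eq:
  assumes i: "1 \<le> i" "i \<le> k+1"
  shows "bd_out L (3*l) (nbhd L X (9*i*l)) =
    {x. a \<le> x \<and> x \<le> b \<and> ((c - rad i - 3 * int l \<le> x \<and> x < c - rad i) \<or>
                     (d + rad i < x \<and> x \<le> d + rad i + 3 * int l))}"
proof -
  have le: "c - rad i \<le> d + rad i" using rad_bounds[OF i] int_l cd by linarith
  show ?thesis
    unfolding bd_out_def nbhd_X_eq[OF i] nbhd_interval[OF le] using le int_l by (auto simp: L_eq)
qed

lemma bd_in_nbhd_X_eq:
  assumes i: "1 \<le> i" "i \<le> k+1"
  shows "bd_in L (3*l) (nbhd L X (9*i*l)) =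
    {x. c - rad i \<le> x \<and> x \<le> d + rad i \<and>
        (x \<le> c - rad i - 1 + 3 * int l \<or> d + rad i + 1 - 3 * int l \<le> x)}"
proof -
  have h: "a \<le> c - rad i - 1" "d + rad i + 1 \<le> b" using rad_bounds[OF i] margins by linarith+
  show ?thesis unfolding nbhd_X_eq[OF i] bd_in_interval[OF L_eq h] int_l ..
qed

lemma mem_annulus_iff:
  assumes i: "1 \<le> i" "i \<le> k+1"
  shows "x \<in> annulus L X l i \<longleftrightarrow> a \<le> x \<and> x \<le> b \<and>
     ((c - rad i - 3 * int l \<le> x \<and> x \<le> c - rad i + 3 * int l - 1) \<or>
      (d + rad i - 3 * int l + 1 \<le> x \<and> x \<le> d + rad i + 3 * int l))"
proof -
  have h: "9 * int l \<le> rad i" "rad i \<le> rad_max" using rad_bounds[OF i] .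
  show ?thesis
    unfolding annulus_def bd_def Un_iff bd_out_nbhd_X_eq[OF i] bd_in_nbhd_X_eq[OF i] mem_Collect_eq
    using h margins cd int_l(2) by linarith
qed

lemma annulus_eq:
  assumes i: "1 \<le> i" "i \<le> k+1"
  shows "annulus L X l i = {max a (c - rad i - 3 * int l) .. c - rad i + 3 * int l - 1} \<union>
               {d + rad i - 3 * int l + 1 .. min b (d + rad i + 3 * int l)}"
proof -
  have h: "9 * int l \<le> rad i" "rad i \<le> rad_max" using rad_bounds[OF i] .
  show ?thesis
  proof (intro set_eqI)
    fix x show "x \<in> annulus L X l i \<longleftrightarrow> x \<in> {max a (c - rad i - 3 * int l) .. c - rad i + 3 * int l - 1} \<union>
               {d + rad i - 3 * int l + 1 .. min b (d + rad i + 3 * int l)}"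
      unfolding mem_annulus_iff[OF i] Un_iff atLeastAtMost_iff max_def min_def using h margins cd int_l(2) by auto
  qed
qed

lemma Upsilon_annulus_le:
  assumes i: "1 \<le> i" "i \<le> k+1"
  shows "Upsilon (annulus L X l i) \<le> 2"
proof -
  have h: "9 * int l \<le> rad i" "rad i \<le> rad_max" using rad_bounds[OF i] .
  show ?thesis unfolding annulus_eq[OF i] 
    by (rule Upsilon_two_intervals_le) (use h margins cd int_l(2) in \<open>simp_all add: max_def min_def\<close>)
qed

lemma annulus_nonempty:
  assumes i: "1 \<le> i" "i \<le> k+1"
  shows "annulus L X l i \<noteq> {}" "annulus L X l i \<subseteq> L"
proof -
  have h: "9 * int l \<le> rad i" "rad i \<le> rad_max" using rad_bounds[OF i] .
  have "c - rad i - 1 \<in> annulus L X l i" unfolding mem_annulus_iff[OF i] using h margins cd int_l(2) by linarith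
  then show "annulus L X l i \<noteq> {}" by auto
  show "annulus L X l i \<subseteq> L" using mem_annulus_iff[OF i] L_eq by auto
qed

lemma annulus_disjoint_X:
  assumes i: "1 \<le> i" "i \<le> k+1"
  shows "annulus L X l i \<inter> X = {}"
proof -
  have h: "9 * int l \<le> rad i" "rad i \<le> rad_max" using rad_bounds[OF i] .
  have "x \<notin> annulus L X l i" if "x \<in> X" for x
    unfolding mem_annulus_iff[OF i] using that h int_l(2) unfolding X_eq atLeastAtMost_iff by linarith
  then show ?thesis by auto
qed

lemma annulus_separated_less:
  assumes i: "1 \<le> i" "i \<le> k+1" and j: "1 \<le> j" "j \<le> k+1" and ij: "i < j"
    and x: "x \<in> annulus L X l i" and y: "y \<in> annulus L X l j"
  shows "\<bar>x - y\<bar> \<ge> 2 * int l + 1"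
  using x y rad_gap[OF ij] rad_bounds[OF i] rad_bounds[OF j] cd int_l(2)
  unfolding mem_annulus_iff[OF i] mem_annulus_iff[OF j] by linarith

lemma annulus_separated:
  assumes i: "i \<in> {1..k+1}" and j: "j \<in> {1..k+1}" and ij: "i \<noteq> j"
    and x: "x \<in> annulus L X l i" and y: "y \<in> annulus L X l j"
  shows "\<bar>x - y\<bar> \<ge> 2 * int l + 1"
proof (cases "i < j")
  case True then show ?thesis using annulus_separated_less i j x y by auto
next
  case False then have "j < i" using ij by auto
  then show ?thesis using annulus_separated_less[of j i y x] i j x y by auto
qed

lemma bd_out_disjoint_inner:
  assumes j: "1 \<le> j" "j \<le> k+1"
  shows "bd_out L (3*l) (nbhd L X (9*j*l)) \<inter> nbhd L X ((9*j-6)*l) = {}"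
proof -
  have "x \<notin> nbhd L X ((9*j-6)*l)" if "x \<in> bd_out L (3*l) (nbhd L X (9*j*l))" for x
  proof
    assume "x \<in> nbhd L X ((9*j-6)*l)"
    from nbhd_intervalD[OF this[unfolded X_eq]] show False
      using that unfolding bd_out_nbhd_X_eq[OF j] rad_inner[OF j(1)] using int_l(2) by auto
  qed
  then show ?thesis by auto
qed

lemma bd_in_disjoint_inner:
  assumes j: "1 \<le> j" "j \<le> k+1"
  shows "bd_in L (3*l) (nbhd L X (9*j*l)) \<inter> nbhd L X ((9*j-6)*l) = {}"
proof -
  have "x \<notin> nbhd L X ((9*j-6)*l)" if "x \<in> bd_in L (3*l) (nbhd L X (9*j*l))" for x
  proof
    assume "x \<in> nbhd L X ((9*j-6)*l)"
    from nbhd_intervalD[OF this[unfolded X_eq]] show False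
      using that unfolding bd_in_nbhd_X_eq[OF j] rad_inner[OF j(1)] using int_l(2) cd by auto
  qed
  then show ?thesis by auto
qed

lemma annulus_subset_outer:
  assumes i: "1 \<le> i" "i \<le> j" "j \<le> k+1"
  shows "annulus L X l i \<subseteq> nbhd L X ((9*j+3)*l)"
proof
  fix x assume x: "x \<in> annulus L X l i"
  have i2: "i \<le> k+1" using i by auto
  have ij: "rad i \<le> rad j" using rad_gap[of i j] i int_l(2) by (cases "i = j") auto
  have h: "9 * int l \<le> rad i" "rad i \<le> rad_max" using rad_bounds[OF i(1) i2] .
  have m: "a \<le> x \<and> x \<le> b \<and>
     ((c - rad i - 3 * int l \<le> x \<and> x \<le> c - rad i + 3 * int l - 1) \<or>
      (d + rad i - 3 * int l + 1 \<le> x \<and> x \<le> d + rad i + 3 * int l))"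
    using x mem_annulus_iff[OF i(1) i2] by blast
  show "x \<in> nbhd L X ((9*j+3)*l)" unfolding X_eq
  proof (rule nbhd_intervalI)
    show "x \<in> L" using m L_eq by auto
    show "c \<le> d" by (rule cd)
    show "c - int ((9*j+3)*l) \<le> x" unfolding rad_outer using m ij h cd by linarith
    show "x \<le> d + int ((9*j+3)*l)" unfolding rad_outer using m ij h cd by linarith
  qed
qed

lemma annulus_subset_inner:
  assumes i: "1 \<le> i" "i < j" "j \<le> k+1"
  shows "annulus L X l i \<subseteq> nbhd L X ((9*j-6)*l)"
proof
  fix x assume x: "x \<in> annulus L X l i"
  have i2: "i \<le> k+1" using i by auto
  have ij: "rad i + 9 * int l \<le> rad j" using rad_gap[OF i(2)] .
  have h: "9 * int l \<le> rad i" "rad i \<le> rad_max" using rad_bounds[OF i(1) i2] .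
  have j1: "1 \<le> j" using i by auto
  have m: "a \<le> x \<and> x \<le> b \<and>
     ((c - rad i - 3 * int l \<le> x \<and> x \<le> c - rad i + 3 * int l - 1) \<or>
      (d + rad i - 3 * int l + 1 \<le> x \<and> x \<le> d + rad i + 3 * int l))"
    using x mem_annulus_iff[OF i(1) i2] by blast
  show "x \<in> nbhd L X ((9*j-6)*l)" unfolding X_eq
  proof (rule nbhd_intervalI)
    show "x \<in> L" using m L_eq by auto
    show "c \<le> d" by (rule cd)
    show "c - int ((9*j-6)*l) \<le> x" unfolding rad_inner[OF j1] using m ij h cd by linarith
    show "x \<le> d + int ((9*j-6)*l)" unfolding rad_inner[OF j1] using m ij h cd by linarith
  qed
qed

lemma Max_Upsilon_annulus_le: "Max ((\<lambda>i. Upsilon (annulus L X l i)) ` {1..k+1}) \<le> 2"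
  using Upsilon_annulus_le by (subst Max_le_iff) auto

end

lemma annuliI:
  assumes L: "fin_interval L" and X: "fin_interval X" "X \<subseteq> L" and l: "l \<ge> 1"
    and far: "setdist X (- L) > real (9 * (k+1) * l + 1)"
  obtains a b c d where "annuli L X a b c d l k"
proof -
  obtain a b where ab: "a \<le> b" "L = {a..b}" using L unfolding fin_interval_def by blast
  obtain c d where cd: "c \<le> d" "X = {c..d}" using X(1) unfolding fin_interval_def by blast
  have r: "real (9 * (k+1) * l + 1) = real_of_int (int (9 * (k+1) * l) + 1)"
    by simp
  have "int (9 * (k+1) * l) + 1 < c - a + 1" "int (9 * (k+1) * l) + 1 < b + 1 - d"
    using setdist_interval_complement[OF ab(2) cd(2) cd(1) X(2) far] unfolding r of_int_less_iff
    by blast+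
  then have "annuli L X a b c d l k"
    by unfold_locales (use ab cd l in auto)
  then show ?thesis by (rule that)
qed

section \<open>The main estimate\<close>

lemma Expect_mono: "(\<And>\<omega>. f \<omega> \<le> g \<omega>) \<Longrightarrow> Expect \<mu> L f \<le> Expect \<mu> L g"
  unfolding Expect_def by (intro nn_integral_mono ennreal_leI)

locale annulus_decomposition = annuli L X a b c d l k + supported_op L X T
  for L X :: "int set" and a b c d :: int and l k :: nat and T :: op
begin

lemma annulus_decomposition_props:
  assumes j: "j \<in> {1..k+1}"
  shows "opeq L (Tpart L T (annulus L X l) j)
           (opmul L (opmul L (Pplus (annulus L X l j)) (Tpart L T (annulus L X l) j)) (Pplus (annulus L X l j)))"
    and "opeq L (Tpart L T (annulus L X l) j)
           (opmul L (opmul L (Pplus (bd_out L (3*l) (nbhd L X (9*j*l))))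
              (Pplus (bd_in L (3*l) (nbhd L X (9*j*l))))) (Trest L T (annulus L X l) j))"
    and "bd_out L (3*l) (nbhd L X (9*j*l)) \<inter> bd_in L (3*l) (nbhd L X (9*j*l)) = {}"
    and "bd_out L (3*l) (nbhd L X (9*j*l)) \<inter> nbhd L X ((9*j-6)*l) = {}"
    and "bd_in L (3*l) (nbhd L X (9*j*l)) \<inter> nbhd L X ((9*j-6)*l) = {}"
    and "supp_in L (nbhd L X ((9*j+3)*l)) (Tpart L T (annulus L X l) j)"
    and "supp_in L (nbhd L X ((9*j-6)*l)) (Trest L T (annulus L X l) j)"
proof -
  from j have j1: "1 \<le> j" and j2: "j \<le> k+1" by auto
  have "0 \<le> rad_max"
    unfolding rad_max_def by simp
  then have "X \<subseteq> L"
    using X_eq L_eq margins cd by auto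
  then have X: "X \<subseteq> nbhd L X t" for t
    by (rule subset_nbhd)
  show "opeq L (Tpart L T (annulus L X l) j)
           (opmul L (opmul L (Pplus (annulus L X l j)) (Tpart L T (annulus L X l) j)) (Pplus (annulus L X l j)))"
    by (rule Tpart_sandwich[where A="annulus L X l", OF annulus_disjoint_X[OF j1 j2]])
  show "opeq L (Tpart L T (annulus L X l) j)
           (opmul L (opmul L (Pplus (bd_out L (3*l) (nbhd L X (9*j*l))))
              (Pplus (bd_in L (3*l) (nbhd L X (9*j*l))))) (Trest L T (annulus L X l) j))"
    by (rule Tpart_factor[where A="annulus L X l", OF annulus_disjoint_X[OF j1 j2]]) (simp add: annulus_def bd_def)
  show "bd_out L (3*l) (nbhd L X (9*j*l)) \<inter> bd_in L (3*l) (nbhd L X (9*j*l)) = {}"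
    by (rule bd_out_disjoint_bd_in)
  show "bd_out L (3*l) (nbhd L X (9*j*l)) \<inter> nbhd L X ((9*j-6)*l) = {}"
    by (rule bd_out_disjoint_inner[OF j1 j2])
  show "bd_in L (3*l) (nbhd L X (9*j*l)) \<inter> nbhd L X ((9*j-6)*l) = {}"
    by (rule bd_in_disjoint_inner[OF j1 j2])
  show "supp_in L (nbhd L X ((9*j+3)*l)) (Tpart L T (annulus L X l) j)"
  proof (rule supp_in_Tpart[OF X nbhd_subset _ j1])
    fix i assume "i \<in> set [1..<Suc j]"
    then show "annulus L X l i \<subseteq> nbhd L X ((9*j+3)*l)"
      using j2 by (intro annulus_subset_outer) auto
  qed
  show "supp_in L (nbhd L X ((9*j-6)*l)) (Trest L T (annulus L X l) j)"
    using annulus_subset_inner j2 by (intro supp_in_Trest[OF X nbhd_subset]) auto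
qed

lemma opnorm_conjop_remainder_le:
  assumes "opnorm L T \<le> 1" and "opnorm L Y \<le> 1"
  shows "opnorm L (conjop L (opsub T (opsum (Tpart L T (annulus L X l)) {1..k+1})) Y)
         \<le> opnorm L (opmul L Y (opprod L (map (\<lambda>i. Pminus (annulus L X l i)) [1..<k+2])))"
proof (rule opnorm_conjop_le[OF finite_L _ assms])
  have "opeq L (Trest L T (annulus L X l) (k+2)) (opmul L (opprod L (map (\<lambda>i. Pminus (annulus L X l i)) [1..<k+2])) T)"
  proof (rule Trest_commute)
    fix i assume "i \<in> set [1..<k+2]"
    then show "annulus L X l i \<inter> X = {}" by (intro annulus_disjoint_X) auto
  qed
  then show "opeq L (opsub T (opsum (Tpart L T (annulus L X l)) {1..k+1}))
                  (opmul L (opprod L (map (\<lambda>i. Pminus (annulus L X l i)) [1..<k+2])) T)"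
    using T_minus_sum_Tpart[OF finite_L, of T "annulus L X l" "k+1"] by (auto intro: opeq_trans)
qed

end

theorem lemma3p3:
  fixes \<mu> :: "real measure" and Del0 lam0 m0 :: real and C :: "nat \<Rightarrow> real"
  assumes law: "admissible_law \<mu>"
    and Del0: "Del0 > 9" and lam0: "lam0 > 0" and m0: "m0 > 0"
    and prev: "\<And>k Del lam L l S. k \<ge> 1 \<Longrightarrow> Del \<ge> Del0 \<Longrightarrow> lam \<ge> lam0 \<Longrightarrow>
        fin_interval L \<Longrightarrow> l \<ge> 1 \<Longrightarrow>
        (\<forall>i\<in>{1..k+1}. S i \<noteq> {} \<and> S i \<subseteq> L) \<Longrightarrow>
        (\<forall>i\<in>{1..k+1}. \<forall>j\<in>{1..k+1}. i \<noteq> j \<longrightarrow>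
            (\<forall>x\<in>S i. \<forall>y\<in>S j. \<bar>x - y\<bar> \<ge> 2 * int l + 1)) \<Longrightarrow>
        Expect \<mu> L (\<lambda>\<omega>. opnorm L (opmul L (chi L (Ile k Del) (Ham L Del lam \<omega>))
                                   (opprod L (map (\<lambda>i. Pminus (S i)) [1..<k+2]))))
          \<le> ennreal (C k * real (Max ((\<lambda>i. Upsilon (S i)) ` {1..k+1}))
                     * real (card L) ^ (2*k+1) * exp (- m0 * real l))"
  shows "\<exists>C' :: nat \<Rightarrow> real. \<forall>k l Del lam L X T.
     k \<ge> 1 \<longrightarrow> l \<ge> 1 \<longrightarrow> Del \<ge> Del0 \<longrightarrow> lam \<ge> lam0 \<longrightarrow>
     fin_interval L \<longrightarrow> fin_interval X \<longrightarrow> X \<subseteq> L \<longrightarrow>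
     supp_in L X T \<longrightarrow> opnorm L T \<le> 1 \<longrightarrow>
     setdist X (- L) > real (9 * (k+1) * l + 1) \<longrightarrow>
     (let A = (\<lambda>i. bd L (3*l) (nbhd L X (9*i*l)));
          Aout = (\<lambda>i. bd_out L (3*l) (nbhd L X (9*i*l)));
          Ain = (\<lambda>i. bd_in L (3*l) (nbhd L X (9*i*l)));
          TP = (\<lambda>j. opmul L T (opprod L (map (\<lambda>i. Pminus (A i)) [1..<j])));
          Tj = (\<lambda>j. opmul L (opmul L T (Pplus (A j))) (opprod L (map (\<lambda>i. Pminus (A i)) [1..<j])))
      in (\<forall>j\<in>{1..k+1}.
            opeq L (Tj j) (opmul L (opmul L (Pplus (A j)) (Tj j)) (Pplus (A j))) \<and>
            opeq L (Tj j) (opmul L (opmul L (Pplus (Aout j)) (Pplus (Ain j))) (TP j)) \<and>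
            Aout j \<inter> Ain j = {} \<and> Aout j \<inter> nbhd L X ((9*j-6)*l) = {} \<and>
            Ain j \<inter> nbhd L X ((9*j-6)*l) = {} \<and>
            supp_in L (nbhd L X ((9*j+3)*l)) (Tj j) \<and>
            supp_in L (nbhd L X ((9*j-6)*l)) (TP j))
         \<and> Expect \<mu> L (\<lambda>\<omega>. opnorm L (conjop L (opsub T (opsum Tj {1..k+1}))
                                          (chi L (Ile k Del) (Ham L Del lam \<omega>))))
             \<le> ennreal (C' k * real (card L) ^ (2*k+1) * exp (- m0 * real l)))"
proof (intro exI[of _ "\<lambda>k. 2 * \<bar>C k\<bar>"] allI impI, goal_cases)
  case (1 k l Del lam L X T)
  then have k: "k \<ge> 1" and l: "l \<ge> 1" and Del: "Del \<ge> Del0" and lam: "lam \<ge> lam0"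
    and L: "fin_interval L" and X: "fin_interval X" "X \<subseteq> L"
    and T_supp: "supp_in L X T" and T_norm: "opnorm L T \<le> 1"
    and far: "setdist X (- L) > real (9 * (k+1) * l + 1)"
    by simp_all
  obtain a b c d where geo: "annuli L X a b c d l k"
    using annuliI[OF L X l far] .
  interpret annulus_decomposition L X a b c d l k T
    using geo T_supp annuli.L_eq[OF geo] by (intro annulus_decomposition.intro supported_op.intro) auto
  let ?P = "\<lambda>\<omega>. chi L (Ile k Del) (Ham L Del lam \<omega>)"
  let ?R = "opsub T (opsum (Tpart L T (annulus L X l)) {1..k+1})"
  let ?Q = "opprod L (map (\<lambda>i. Pminus (annulus L X l i)) [1..<k+2])"
  let ?M = "real (Max ((\<lambda>i. Upsilon (annulus L X l i)) ` {1..k+1}))"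
  have "Expect \<mu> L (\<lambda>\<omega>. opnorm L (conjop L ?R (?P \<omega>))) \<le> Expect \<mu> L (\<lambda>\<omega>. opnorm L (opmul L (?P \<omega>) ?Q))"
    using hermitian.opnorm_chi_le_1 herm_Ham finite_L
    by (intro Expect_mono opnorm_conjop_remainder_le T_norm) (simp add: hermitian_def)
  also have "\<dots> \<le> ennreal (C k * ?M * real (card L) ^ (2*k+1) * exp (- m0 * real l))"
    using annulus_nonempty annulus_separated by (intro prev[OF k Del lam L l]) auto
  also have "\<dots> \<le> ennreal (2 * \<bar>C k\<bar> * real (card L) ^ (2*k+1) * exp (- m0 * real l))"
  proof (intro ennreal_leI mult_right_mono)
    have "C k * ?M \<le> \<bar>C k\<bar> * ?M" by (intro mult_right_mono) auto
    also have "\<dots> \<le> \<bar>C k\<bar> * 2" using Max_Upsilon_annulus_le by (intro mult_left_mono) auto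
    finally show "C k * ?M \<le> 2 * \<bar>C k\<bar>" by simp
  qed auto
  finally show ?case
    using annulus_decomposition_props unfolding Let_def Tpart_def Trest_def annulus_def by simp
qed

end
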